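(* Let $\mathcal{A}$ be an associative algebra with unit $I$, and let $w_n,\tilde w_n$ ($n\ge1$) be $\mathcal{A}$-valued differentiable functions of $\mathbf{t}_o=(t_1,t_3,t_5,\ldots)$. Put $w(\mathbf{t}_o,z)=I+\sum_{n\ge1}w_nz^{-n}$, $\tilde w(\mathbf{t}_o,z)=I+\sum_{n\ge1}\tilde w_nz^{-n}$, $\tilde\xi(\mathbf{t}_o,z)=\sum_{n\ge1}t_{2n-1}z^{2n-1}$, $\psi=we^{\tilde\xi}$, $\tilde\psi=\tilde we^{-\tilde\xi}$, and suppose $\mathrm{res}_z[\psi(\mathbf{s}_o,z)\tilde\psi(\mathbf{t}_o,z)]=0$ for all $\mathbf{s}_o,\mathbf{t}_o$. Define $\phi:=-w_1$, $\tilde\theta$ by $w_2=-\tilde\theta+\frac12(\phi'+\phi^2)$, $\check\theta:=\tilde\theta+\frac12\phi'$, $F(\lambda):=I-\frac\lambda2(\phi_{2[\lambda]}-\phi)$, and $F(\lambda,\mu):=I-\frac12\frac{\lambda\mu}{\lambda+\mu}(\phi_{2[\lambda]+2[\mu]}-\phi)=\frac1{\lambda+\mu}\big(\mu F_{2[\mu]}(\lambda)+\lambda F(\mu)\big)$. Then, writing $w(z)=w(\mathbf{t}_o,z)$, $\tilde w(z)=\tilde w(\mathbf{t}_o,z)$: (i) $\tilde w_2=\tilde\theta+\frac12(\phi'+\phi^2)$; (ii) $w_{2[\lambda]}(\lambda^{-1})\,\tilde w(\lambda^{-1})=F(\lambda)$; (iii) $\big(w'(\lambda^{-1})+\lambda^{-1}w(\lambda^{-1})\big)_{2[\lambda]}\tilde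 w(\lambda^{-1})=\lambda^{-1}F(\lambda)^2-\frac\lambda2(\check\theta_{2[\lambda]}-\check\theta)+\frac\lambda4[\phi,\phi_{2[\lambda]}]$; (iv) $\mu^{-1}w_{2[\lambda]+2[\mu]}(\mu^{-1})\tilde w(\mu^{-1})-\lambda^{-1}w_{2[\lambda]+2[\mu]}(\lambda^{-1})\tilde w(\lambda^{-1})=(\mu^{-1}-\lambda^{-1})F(\lambda,\mu)$; (v) $\mu^{-1}\big(w'(\mu^{-1})+\mu^{-1}w(\mu^{-1})\big)_{2[\lambda]+2[\mu]}\tilde w(\mu^{-1})-\lambda^{-1}\big(w'(\lambda^{-1})+\lambda^{-1}w(\lambda^{-1})\big)_{2[\lambda]+2[\mu]}\tilde w(\lambda^{-1})=(\mu^{-2}-\lambda^{-2})F(\lambda,\mu)^2-\frac12\frac{\lambda-\mu}{\lambda+\mu}(\check\theta_{2[\lambda]+2[\mu]}-\check\theta)+\frac14\frac{\lambda-\mu}{\lambda+\mu}[\phi,\phi_{2[\lambda]+2[\mu]}]$.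
   Context: $\mathrm{res}_z$ of a formal series $\sum_nf_nz^{-n}$ is $f_1$. A prime denotes the partial derivative with respect to $t_1$. Miwa shifts: $f_{2[\lambda]}(\mathbf{t}_o)=f(\mathbf{t}_o+2[\lambda])$, $f_{2[\lambda]+2[\mu]}(\mathbf{t}_o)=f(\mathbf{t}_o+2[\lambda]+2[\mu])$ with $[\lambda]=(\lambda,\lambda^3/3,\lambda^5/5,\ldots)$; e.g. $w_{2[\lambda]}(\lambda^{-1})$ means $w(\mathbf{t}_o+2[\lambda],\lambda^{-1})$. Identities in $\lambda,\mu$ are understood as formal series identities. $[\cdot,\cdot]$ is the commutator. *)

theory Defs
  imports Complex_Main "HOL-Computational_Algebra.Formal_Laurent_Series"
begin

text \<open>
The A-valued differentiable functions of t_o = (t_1,t_3,t_5,...) are modelled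
by a unital associative real algebra 'r (the algebra of such functions, unit I = 1) together with
commuting derivations D k = partial derivative with respect to t_(2k+1) (so the prime is D 0).
Formal series in the spectral parameter lambda are elements of 'r fls (variable fls_X);
formal series in lambda, mu are elements of ('r fls) fls, lambda being the inner variable
and mu the outer one.
\<close>

definition Dpow :: "(nat \<Rightarrow> 'r \<Rightarrow> 'r) \<Rightarrow> nat \<Rightarrow> (nat \<Rightarrow> nat) \<Rightarrow> 'r \<Rightarrow> 'r" where
  "Dpow D N \<alpha> f = foldr (\<lambda>k g. (D k ^^ \<alpha> k) g) [0..<N] f"

definition oddwt :: "nat \<Rightarrow> (nat \<Rightarrow> nat) \<Rightarrow> nat" where
  "oddwt N \<alpha> = (\<Sum>k<N. (2 * k + 1) * \<alpha> k)"

definition mfact :: "nat \<Rightarrow> (nat \<Rightarrow> nat) \<Rightarrow> real" where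
  "mfact N \<alpha> = (\<Prod>k<N. fact (\<alpha> k))"

text \<open>Bilinear identity  res_z [psi(s_o,z) psi~(t_o,z)] = 0  for all s_o, t_o, in formal form:
 writing s_o = t_o + y, the coefficient of every monomial y^alpha of
 res_z [ w(t_o+y,z) e^(xi~(y,z)) w~(t_o,z) ] vanishes.  Here w n, wt n are the coefficients of
 z^(-n) of w and w~ (with w 0 = wt 0 = 1).\<close>
definition bilinear_identity ::
  "(nat \<Rightarrow> 'r::real_algebra_1 \<Rightarrow> 'r) \<Rightarrow> (nat \<Rightarrow> 'r) \<Rightarrow> (nat \<Rightarrow> 'r) \<Rightarrow> bool" where
  "bilinear_identity D w wt \<longleftrightarrow>
     (\<forall>N \<alpha>. (\<forall>k\<ge>N. \<alpha> k = 0) \<longrightarrow>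
        (\<Sum>\<beta>\<in>{\<beta>. \<forall>k. \<beta> k \<le> \<alpha> k}.
           inverse (mfact N \<beta> * mfact N (\<lambda>k. \<alpha> k - \<beta> k)) *\<^sub>R
           (\<Sum>n\<le>oddwt N (\<lambda>k. \<alpha> k - \<beta> k) + 1.
               Dpow D N \<beta> (w n) * wt (oddwt N (\<lambda>k. \<alpha> k - \<beta> k) + 1 - n))) = 0)"

text \<open>coefficient of lambda^m in the Miwa shift f(t_o + 2[lambda]) =
 exp(sum_k 2 lambda^(2k+1)/(2k+1) D_k) f\<close>
definition miwa_coeff :: "(nat \<Rightarrow> 'r::real_algebra_1 \<Rightarrow> 'r) \<Rightarrow> nat \<Rightarrow> 'r \<Rightarrow> 'r" where
  "miwa_coeff D m f =
     (\<Sum>\<alpha>\<in>{\<alpha>. (\<forall>k\<ge>m. \<alpha> k = 0) \<and> oddwt m \<alpha> = m}.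
        (\<Prod>k<m. (2 / real (2 * k + 1)) ^ \<alpha> k / fact (\<alpha> k)) *\<^sub>R Dpow D m \<alpha> f)"

text \<open>f(t_o + 2[lambda]) as a series in lambda\<close>
definition miwa1 :: "(nat \<Rightarrow> 'r::real_algebra_1 \<Rightarrow> 'r) \<Rightarrow> 'r \<Rightarrow> 'r fls" where
  "miwa1 D f = fps_to_fls (Abs_fps (\<lambda>m. miwa_coeff D m f))"

text \<open>c(lambda^-1) = sum_n c_n lambda^n for a sequence c of coefficients of z^(-n)\<close>
definition ser1 :: "(nat \<Rightarrow> 'r::zero) \<Rightarrow> 'r fls" where
  "ser1 c = fps_to_fls (Abs_fps c)"

text \<open>c_{2[lambda]}(lambda^-1) = sum_n lambda^n c_n(t_o + 2[lambda])\<close>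
definition shser1 :: "(nat \<Rightarrow> 'r::real_algebra_1 \<Rightarrow> 'r) \<Rightarrow> (nat \<Rightarrow> 'r) \<Rightarrow> 'r fls" where
  "shser1 D c = fps_to_fls (Abs_fps (\<lambda>N. \<Sum>n\<le>N. miwa_coeff D (N - n) (c n)))"

definition Lam :: "'r::{zero,one} fls fls" where "Lam = fls_const fls_X"
definition Mu :: "'r::{zero,one} fls fls" where "Mu = fls_X"
definition Lam_inv :: "'r::{zero,one} fls fls" where "Lam_inv = fls_const fls_X_inv"
definition Mu_inv :: "'r::{zero,one} fls fls" where "Mu_inv = fls_X_inv"
definition C2 :: "'r::zero \<Rightarrow> 'r fls fls" where "C2 x = fls_const (fls_const x)"

definition bivar :: "(nat \<Rightarrow> nat \<Rightarrow> 'r::zero) \<Rightarrow> 'r fls fls" where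
  "bivar c = fps_to_fls (Abs_fps (\<lambda>b. fps_to_fls (Abs_fps (\<lambda>a. c a b))))"

text \<open>f(t_o + 2[lambda] + 2[mu])\<close>
definition miwa2 :: "(nat \<Rightarrow> 'r::real_algebra_1 \<Rightarrow> 'r) \<Rightarrow> 'r \<Rightarrow> 'r fls fls" where
  "miwa2 D f = bivar (\<lambda>a b. miwa_coeff D a (miwa_coeff D b f))"

text \<open>f(t_o + 2[mu]) as a series in mu\<close>
definition miwa_mu :: "(nat \<Rightarrow> 'r::real_algebra_1 \<Rightarrow> 'r) \<Rightarrow> 'r \<Rightarrow> 'r fls fls" where
  "miwa_mu D f = bivar (\<lambda>a b. if a = 0 then miwa_coeff D b f else 0)"

text \<open>c(lambda^-1) and c(mu^-1)\<close>
definition ser_lam :: "(nat \<Rightarrow> 'r::zero) \<Rightarrow> 'r fls fls" where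
  "ser_lam c = bivar (\<lambda>a b. if b = 0 then c a else 0)"
definition ser_mu :: "(nat \<Rightarrow> 'r::zero) \<Rightarrow> 'r fls fls" where
  "ser_mu c = bivar (\<lambda>a b. if a = 0 then c b else 0)"

text \<open>c_{2[lambda]+2[mu]}(lambda^-1) and c_{2[lambda]+2[mu]}(mu^-1)\<close>
definition shser_lam :: "(nat \<Rightarrow> 'r::real_algebra_1 \<Rightarrow> 'r) \<Rightarrow> (nat \<Rightarrow> 'r) \<Rightarrow> 'r fls fls" where
  "shser_lam D c = bivar (\<lambda>a b. \<Sum>n\<le>a. miwa_coeff D (a - n) (miwa_coeff D b (c n)))"
definition shser_mu :: "(nat \<Rightarrow> 'r::real_algebra_1 \<Rightarrow> 'r) \<Rightarrow> (nat \<Rightarrow> 'r) \<Rightarrow> 'r fls fls" where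
  "shser_mu D c = bivar (\<lambda>a b. \<Sum>n\<le>b. miwa_coeff D a (miwa_coeff D (b - n) (c n)))"

text \<open>two-sided inverse of a unit (used for 1/(lambda+mu), a unit of ('r fls) fls)\<close>
definition uinv :: "'a::ring_1 \<Rightarrow> 'a" where
  "uinv x = (THE y. x * y = 1 \<and> y * x = 1)"

definition commut :: "'a::ring \<Rightarrow> 'a \<Rightarrow> 'a" where
  "commut x y = x * y - y * x"

end

theory Submission
  imports Defs
begin

text \<open>
  The Miwa shift \<open>t\<^sub>o \<mapsto> t\<^sub>o + 2[\<lambda>]\<close> acts as
  \<open>exp (\<Sum>\<^sub>k 2 \<lambda>\<^bsup>2k+1\<^esup>/(2k+1) \<partial>\<^sub>2\<^sub>k\<^sub>+\<^sub>1)\<close> and multiplies \<open>e\<^bsup>\<xi>~(t\<^sub>o, z)\<^esup>\<close> by \<open>(1 + \<lambda>z)/(1 - \<lambda>z)\<close>.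
  Both factors obey first-order recurrences in \<open>\<lambda>\<close> which trade a power of \<open>\<lambda>\<close> for a derivative, so
  induction on the degree in \<open>\<lambda>\<close> and \<open>\<mu>\<close> turns the bilinear identity into
  \<open>res\<^sub>z [w(t\<^sub>o + 2[\<lambda>] + 2[\<mu>], z) (1 + \<lambda>z)/(1 - \<lambda>z) (1 + \<mu>z)/(1 - \<mu>z) w~(t\<^sub>o, z)] = 0\<close>,
  and likewise with \<open>w' + z w\<close> in place of \<open>w\<close>. Writing \<open>(1 + \<lambda>z)/(1 - \<lambda>z) = 2/(1 - \<lambda>z) - 1\<close>,
  these residues become linear relations which express the products in (ii)--(v) through their
  leading coefficients; the two-parameter relations are solved after division by \<open>\<lambda> + \<mu>\<close>. The
  leading coefficients come from the residue identity in lowest order: \<open>w~\<^sub>1 = -w\<^sub>1\<close> and (i).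
\<close>

section \<open>Derivations and multi-index powers\<close>

locale commuting_derivations =
  fixes D :: "nat \<Rightarrow> 'r::real_algebra_1 \<Rightarrow> 'r"
  assumes D_add: "\<And>k a b. D k (a + b) = D k a + D k b"
    and D_scaleR: "\<And>k c a. D k (c *\<^sub>R a) = c *\<^sub>R D k a"
    and D_mult: "\<And>k a b. D k (a * b) = D k a * b + a * D k b"
    and D_commute: "\<And>j k a. D j (D k a) = D k (D j a)"
begin

lemma D_zero [simp]: "D k 0 = 0"
  using D_scaleR[of k 0 0] by simp

lemma D_one [simp]: "D k 1 = 0"
  using D_mult[of k 1 1] by simp

lemma D_diff: "D k (a - b) = D k a - D k b"
  using D_add[of k "a - b" b] by (simp add: algebra_simps)

lemma D_uminus: "D k (- a) = - D k a"
  using D_diff[of k 0 a] by simp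

lemma D_sum: "D k (sum f A) = (\<Sum>x\<in>A. D k (f x))"
  by (induction A rule: infinite_finite_induct) (auto simp: D_add)

lemma D_funpow_add: "(D k ^^ n) (a + b) = (D k ^^ n) a + (D k ^^ n) b"
  by (induction n) (auto simp: D_add)

lemma D_funpow_scaleR: "(D k ^^ n) (c *\<^sub>R a) = c *\<^sub>R (D k ^^ n) a"
  by (induction n) (auto simp: D_scaleR)

lemma D_funpow_commute: "D j ((D k ^^ n) a) = (D k ^^ n) (D j a)"
  by (induction n) (simp_all, metis D_commute)

lemma Dpow_0 [simp]: "Dpow D 0 \<alpha> f = f"
  by (simp add: Dpow_def)

lemma Dpow_Suc: "Dpow D (Suc N) \<alpha> f = Dpow D N \<alpha> ((D N ^^ \<alpha> N) f)"
  by (simp add: Dpow_def)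

lemma Dpow_add: "Dpow D N \<alpha> (a + b) = Dpow D N \<alpha> a + Dpow D N \<alpha> b"
  by (induction N arbitrary: a b) (auto simp: Dpow_Suc D_funpow_add)

lemma Dpow_scaleR: "Dpow D N \<alpha> (c *\<^sub>R a) = c *\<^sub>R Dpow D N \<alpha> a"
  by (induction N arbitrary: a) (auto simp: Dpow_Suc D_funpow_scaleR)

lemma D_Dpow_commute: "D j (Dpow D N \<alpha> a) = Dpow D N \<alpha> (D j a)"
  by (induction N arbitrary: a) (auto simp: Dpow_Suc D_funpow_commute)

lemma Dpow_cong: "(\<And>k. k < N \<Longrightarrow> \<alpha> k = \<beta> k) \<Longrightarrow> Dpow D N \<alpha> a = Dpow D N \<beta> a"
  by (induction N arbitrary: a) (auto simp: Dpow_Suc)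

lemma Dpow_zero_index [simp]: "Dpow D N (\<lambda>_. 0) a = a"
  by (induction N arbitrary: a) (auto simp: Dpow_Suc)

lemma Dpow_incr: "k < N \<Longrightarrow> Dpow D N (\<alpha>(k := \<alpha> k + 1)) a = D k (Dpow D N \<alpha> a)"
proof (induction N arbitrary: a)
  case (Suc N)
  show ?case
  proof (cases "k = N")
    case True
    have "Dpow D (Suc N) (\<alpha>(k := \<alpha> k + 1)) a
        = Dpow D N (\<alpha>(k := \<alpha> k + 1)) ((D N ^^ (\<alpha> N + 1)) a)"
      using True by (simp add: Dpow_Suc)
    also have "\<dots> = Dpow D N \<alpha> ((D N ^^ (\<alpha> N + 1)) a)"
      by (rule Dpow_cong) (use True in auto)
    also have "\<dots> = D k (Dpow D (Suc N) \<alpha> a)"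
      using True by (simp add: Dpow_Suc D_Dpow_commute)
    finally show ?thesis .
  next
    case False
    then show ?thesis using Suc by (simp add: Dpow_Suc)
  qed
qed simp

lemma Dpow_extend:
  assumes "\<And>k. k \<ge> N \<Longrightarrow> \<alpha> k = 0" and "N \<le> M"
  shows "Dpow D M \<alpha> a = Dpow D N \<alpha> a"
  using assms(2) by (induction M arbitrary: a) (auto simp: Dpow_Suc assms(1) le_Suc_eq)

end

section \<open>Coefficients of the Miwa shift\<close>

definition miwa_weight :: "nat \<Rightarrow> (nat \<Rightarrow> nat) \<Rightarrow> real" where
  "miwa_weight N \<alpha> = (\<Prod>k<N. (2 / real (2 * k + 1)) ^ \<alpha> k / fact (\<alpha> k))"

definition weighted_indices :: "nat \<Rightarrow> nat \<Rightarrow> (nat \<Rightarrow> nat) set" where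
  "weighted_indices N m = {\<alpha>. (\<forall>k\<ge>N. \<alpha> k = 0) \<and> oddwt N \<alpha> = m}"

lemma oddwt_ge: "k < N \<Longrightarrow> (2 * k + 1) * \<alpha> k \<le> oddwt N \<alpha>"
  unfolding oddwt_def by (rule member_le_sum) auto

lemma oddwt_extend: "(\<And>k. k \<ge> N \<Longrightarrow> \<alpha> k = 0) \<Longrightarrow> N \<le> M \<Longrightarrow> oddwt M \<alpha> = oddwt N \<alpha>"
  unfolding oddwt_def by (rule sum.mono_neutral_right) auto

lemma oddwt_incr:
  assumes "k < N"
  shows "oddwt N (\<beta>(k := \<beta> k + 1)) = oddwt N \<beta> + (2 * k + 1)"
proof -
  have "(2 * i + 1) * (\<beta>(k := \<beta> k + 1)) i = (2 * i + 1) * \<beta> i + (if i = k then 2 * k + 1 else 0)" for i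
    by auto
  then show ?thesis using assms by (simp add: oddwt_def sum.distrib)
qed

lemma miwa_weight_extend:
  "(\<And>k. k \<ge> N \<Longrightarrow> \<alpha> k = 0) \<Longrightarrow> N \<le> M \<Longrightarrow> miwa_weight M \<alpha> = miwa_weight N \<alpha>"
  unfolding miwa_weight_def by (rule prod.mono_neutral_right) auto

lemma miwa_weight_incr:
  assumes "k < N"
  shows "real (2 * k + 1) * real (\<beta> k + 1) * miwa_weight N (\<beta>(k := \<beta> k + 1)) = 2 * miwa_weight N \<beta>"
proof -
  define g where "g i b = (2 / real (2 * i + 1)) ^ b / fact b" for i b
  have k: "k \<in> {..<N}" using assms by simp
  have "miwa_weight N (\<beta>(k := \<beta> k + 1)) = g k (\<beta> k + 1) * (\<Prod>i\<in>{..<N}-{k}. g i (\<beta> i))"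
    unfolding miwa_weight_def g_def[symmetric] by (subst prod.remove[OF _ k]) (auto intro!: prod.cong)
  moreover have "miwa_weight N \<beta> = g k (\<beta> k) * (\<Prod>i\<in>{..<N}-{k}. g i (\<beta> i))"
    unfolding miwa_weight_def g_def[symmetric] by (subst prod.remove[OF _ k]) auto
  moreover have "g k (\<beta> k + 1) = g k (\<beta> k) * (2 / real (2 * k + 1)) / real (\<beta> k + 1)"
    by (simp add: g_def fact_Suc field_simps)
  moreover have "a * b * (x * (2 / a) / b * y) = 2 * (x * y)" if "a \<noteq> 0" "b \<noteq> 0" for a b x y :: real
    using that by (simp add: field_simps)
  ultimately show ?thesis by simp
qed

lemma finite_weighted_indices: "finite (weighted_indices N m)"
proof (rule finite_subset)
  show "weighted_indices N m \<subseteq> {f. \<forall>x. (x \<in> {..<N} \<longrightarrow> f x \<in> {..m}) \<and> (x \<notin> {..<N} \<longrightarrow> f x = 0)}"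
  proof (intro subsetI CollectI allI conjI impI)
    fix f x assume f: "f \<in> weighted_indices N m" and "x \<in> {..<N}"
    then have "(2 * x + 1) * f x \<le> m"
      using oddwt_ge[of x N f] by (simp add: weighted_indices_def)
    moreover have "f x \<le> (2 * x + 1) * f x" by simp
    ultimately show "f x \<in> {..m}" by simp
  qed (simp add: weighted_indices_def)
  show "finite {f. \<forall>x. (x \<in> {..<N} \<longrightarrow> f x \<in> {..m}) \<and> (x \<notin> {..<N} \<longrightarrow> f x = (0::nat))}"
    by (rule finite_set_of_finite_funs) auto
qed

lemma weighted_indices_vanish:
  "\<alpha> \<in> weighted_indices N m \<Longrightarrow> m < 2 * k + 1 \<Longrightarrow> \<alpha> k = 0"
proof (cases "k < N")
  case True
  assume "\<alpha> \<in> weighted_indices N m" "m < 2 * k + 1"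
  then have "(2 * k + 1) * \<alpha> k < 2 * k + 1"
    using oddwt_ge[OF True, of \<alpha>] by (simp add: weighted_indices_def)
  then show ?thesis by (cases "\<alpha> k") auto
qed (simp add: weighted_indices_def)

lemma weighted_indices_extend:
  assumes "m \<le> N"
  shows "weighted_indices N m = weighted_indices m m"
proof safe
  fix \<alpha> assume \<alpha>: "\<alpha> \<in> weighted_indices N m"
  then have "\<alpha> k = 0" if "k \<ge> m" for k
    using weighted_indices_vanish[OF \<alpha>] that by simp
  moreover have "oddwt N \<alpha> = oddwt m \<alpha>"
    by (rule oddwt_extend) (use calculation assms in auto)
  ultimately show "\<alpha> \<in> weighted_indices m m"
    using \<alpha> by (simp add: weighted_indices_def)
next
  fix \<alpha> assume \<alpha>: "\<alpha> \<in> weighted_indices m m"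
  have "oddwt N \<alpha> = oddwt m \<alpha>"
    by (rule oddwt_extend) (use \<alpha> assms in \<open>auto simp: weighted_indices_def\<close>)
  then show "\<alpha> \<in> weighted_indices N m"
    using \<alpha> assms by (auto simp: weighted_indices_def)
qed

lemma weighted_indices_incr_bij:
  assumes "k < N" and "2 * k \<le> m"
  shows "bij_betw (\<lambda>\<beta>. \<beta>(k := \<beta> k + 1)) (weighted_indices N (m - 2 * k))
           {\<alpha> \<in> weighted_indices N (Suc m). \<alpha> k \<noteq> 0}"
proof (rule bij_betw_byWitness[where f' = "\<lambda>\<alpha>. \<alpha>(k := \<alpha> k - 1)"])
  show "(\<lambda>\<beta>. \<beta>(k := \<beta> k + 1)) ` weighted_indices N (m - 2 * k)
      \<subseteq> {\<alpha> \<in> weighted_indices N (Suc m). \<alpha> k \<noteq> 0}"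
    using assms oddwt_incr[OF assms(1)] by (auto simp: weighted_indices_def)
  show "(\<lambda>\<alpha>. \<alpha>(k := \<alpha> k - 1)) ` {\<alpha> \<in> weighted_indices N (Suc m). \<alpha> k \<noteq> 0}
      \<subseteq> weighted_indices N (m - 2 * k)"
  proof (rule image_subsetI)
    fix \<alpha> assume "\<alpha> \<in> {\<alpha> \<in> weighted_indices N (Suc m). \<alpha> k \<noteq> 0}"
    then have \<alpha>: "\<alpha> \<in> weighted_indices N (Suc m)" "\<alpha> k \<noteq> 0" by auto
    then have "\<alpha> = (\<alpha>(k := \<alpha> k - 1))(k := (\<alpha>(k := \<alpha> k - 1)) k + 1)" by auto
    then have "oddwt N \<alpha> = oddwt N (\<alpha>(k := \<alpha> k - 1)) + (2 * k + 1)"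
      by (metis oddwt_incr[OF assms(1)])
    then show "\<alpha>(k := \<alpha> k - 1) \<in> weighted_indices N (m - 2 * k)"
      using \<alpha> assms by (auto simp: weighted_indices_def)
  qed
qed (auto simp: fun_eq_iff)

lemma sum_triangle_div2_swap:
  "(\<Sum>j\<le>(b::nat). \<Sum>k\<le>(b - j) div 2. f j k) = (\<Sum>k\<le>b div 2. \<Sum>j\<le>b - 2 * k. f j k)"
proof -
  have "(\<Sum>j\<le>b. \<Sum>k\<le>(b - j) div 2. f j k) = (\<Sum>j\<le>b. \<Sum>k\<in>{k. k \<in> {..b div 2} \<and> j + 2 * k \<le> b}. f j k)"
    by (rule sum.cong[OF refl], rule sum.cong) auto
  also have "\<dots> = (\<Sum>k\<le>b div 2. \<Sum>j\<in>{j. j \<in> {..b} \<and> j + 2 * k \<le> b}. f j k)"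
    by (rule sum.swap_restrict) auto
  also have "\<dots> = (\<Sum>k\<le>b div 2. \<Sum>j\<le>b - 2 * k. f j k)"
    by (rule sum.cong[OF refl], rule sum.cong) auto
  finally show ?thesis .
qed

lemma sum_triangle_div2_swap_shift:
  "(\<Sum>j\<le>(b::nat). \<Sum>k\<le>j div 2. f j k) = (\<Sum>k\<le>b div 2. \<Sum>j\<le>b - 2 * k. f (j + 2 * k) k)"
proof -
  have "(\<Sum>j\<le>b. \<Sum>k\<le>j div 2. f j k) = (\<Sum>j\<le>b. \<Sum>k\<in>{k. k \<in> {..b div 2} \<and> 2 * k \<le> j}. f j k)"
    by (rule sum.cong[OF refl], rule sum.cong) auto
  also have "\<dots> = (\<Sum>k\<le>b div 2. \<Sum>j\<in>{j. j \<in> {..b} \<and> 2 * k \<le> j}. f j k)"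
    by (rule sum.swap_restrict) auto
  also have "\<dots> = (\<Sum>k\<le>b div 2. \<Sum>j\<le>b - 2 * k. f (j + 2 * k) k)"
  proof (rule sum.cong[OF refl])
    fix k assume k: "k \<in> {..b div 2}"
    show "(\<Sum>j\<in>{j. j \<in> {..b} \<and> 2 * k \<le> j}. f j k) = (\<Sum>j\<le>b - 2 * k. f (j + 2 * k) k)"
      by (rule sum.reindex_bij_witness[where i="\<lambda>j. j + 2 * k" and j="\<lambda>j. j - 2 * k"]) (use k in auto)
  qed
  finally show ?thesis .
qed

context commuting_derivations
begin

abbreviation P :: "nat \<Rightarrow> 'r \<Rightarrow> 'r" where "P m f \<equiv> miwa_coeff D m f"

lemma P_add: "P m (a + b) = P m a + P m b"
  by (simp add: miwa_coeff_def Dpow_add scaleR_add_right sum.distrib)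

lemma P_scaleR: "P m (c *\<^sub>R a) = c *\<^sub>R P m a"
  unfolding miwa_coeff_def by (simp add: Dpow_scaleR scaleR_sum_right mult.commute)

lemma P_zero [simp]: "P m 0 = 0"
  using P_scaleR[of m 0 0] by simp

lemma P_diff: "P m (a - b) = P m a - P m b"
  using P_add[of m "a - b" b] by (simp add: algebra_simps)

lemma P_uminus: "P m (- a) = - P m a"
  using P_diff[of m 0 a] by simp

lemma P_sum: "P m (sum f A) = (\<Sum>x\<in>A. P m (f x))"
  by (induction A rule: infinite_finite_induct) (auto simp: P_add)

lemma P_D_commute: "P m (D k a) = D k (P m a)"
  by (simp add: miwa_coeff_def D_sum D_scaleR D_Dpow_commute)

lemma P_0 [simp]: "P 0 f = f"
proof -
  have "{\<alpha>::nat\<Rightarrow>nat. (\<forall>k\<ge>0. \<alpha> k = 0) \<and> oddwt 0 \<alpha> = 0} = {\<lambda>_. 0}"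
    by (auto simp: oddwt_def)
  then show ?thesis by (simp add: miwa_coeff_def)
qed

lemma P_extend:
  assumes "m \<le> N"
  shows "P m f = (\<Sum>\<alpha>\<in>weighted_indices N m. miwa_weight N \<alpha> *\<^sub>R Dpow D N \<alpha> f)"
proof -
  have "P m f = (\<Sum>\<alpha>\<in>weighted_indices m m. miwa_weight m \<alpha> *\<^sub>R Dpow D m \<alpha> f)"
    by (simp add: miwa_coeff_def weighted_indices_def miwa_weight_def)
  also have "\<dots> = (\<Sum>\<alpha>\<in>weighted_indices N m. miwa_weight N \<alpha> *\<^sub>R Dpow D N \<alpha> f)"
    unfolding weighted_indices_extend[OF assms]
  proof (rule sum.cong[OF refl])
    fix \<alpha> assume "\<alpha> \<in> weighted_indices m m"
    then have "\<And>k. k \<ge> m \<Longrightarrow> \<alpha> k = 0" by (simp add: weighted_indices_def)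
    then show "miwa_weight m \<alpha> *\<^sub>R Dpow D m \<alpha> f = miwa_weight N \<alpha> *\<^sub>R Dpow D N \<alpha> f"
      using miwa_weight_extend Dpow_extend assms by metis
  qed
  finally show ?thesis .
qed

lemma weighted_sum_component:
  assumes "k < N" and "m \<le> N"
  shows "(\<Sum>\<alpha>\<in>weighted_indices N (Suc m). (real ((2 * k + 1) * \<alpha> k) * miwa_weight N \<alpha>) *\<^sub>R Dpow D N \<alpha> f)
    = (if 2 * k \<le> m then 2 *\<^sub>R D k (P (m - 2 * k) f) else 0)"
proof (cases "2 * k \<le> m")
  case True
  let ?incr = "\<lambda>\<beta>. \<beta>(k := \<beta> k + 1)"
  have "(\<Sum>\<alpha>\<in>weighted_indices N (Suc m). (real ((2 * k + 1) * \<alpha> k) * miwa_weight N \<alpha>) *\<^sub>R Dpow D N \<alpha> f)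
      = (\<Sum>\<alpha>\<in>{\<alpha> \<in> weighted_indices N (Suc m). \<alpha> k \<noteq> 0}.
           (real ((2 * k + 1) * \<alpha> k) * miwa_weight N \<alpha>) *\<^sub>R Dpow D N \<alpha> f)"
    by (rule sum.mono_neutral_right) (auto simp: finite_weighted_indices)
  also have "\<dots> = (\<Sum>\<beta>\<in>weighted_indices N (m - 2 * k).
      (real ((2 * k + 1) * ?incr \<beta> k) * miwa_weight N (?incr \<beta>)) *\<^sub>R Dpow D N (?incr \<beta>) f)"
    by (rule sum.reindex_bij_betw[symmetric]) (rule weighted_indices_incr_bij[OF assms(1) True])
  also have "\<dots> = (\<Sum>\<beta>\<in>weighted_indices N (m - 2 * k). 2 *\<^sub>R D k (miwa_weight N \<beta> *\<^sub>R Dpow D N \<beta> f))"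
  proof (rule sum.cong[OF refl])
    fix \<beta>
    have "real ((2 * k + 1) * ?incr \<beta> k) * miwa_weight N (?incr \<beta>) = 2 * miwa_weight N \<beta>"
      using miwa_weight_incr[OF assms(1), of \<beta>] by (simp only: fun_upd_same of_nat_mult)
    then show "(real ((2 * k + 1) * ?incr \<beta> k) * miwa_weight N (?incr \<beta>)) *\<^sub>R Dpow D N (?incr \<beta>) f
        = 2 *\<^sub>R D k (miwa_weight N \<beta> *\<^sub>R Dpow D N \<beta> f)"
      using Dpow_incr[OF assms(1)] by (simp add: D_scaleR)
  qed
  also have "\<dots> = 2 *\<^sub>R D k (P (m - 2 * k) f)"
    using P_extend[of "m - 2 * k" N f] assms by (simp add: D_sum scaleR_sum_right)
  finally show ?thesis using True by simp
next
  case False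
  have vanish: "\<alpha> k = 0" if "\<alpha> \<in> weighted_indices N (Suc m)" for \<alpha>
    using weighted_indices_vanish[OF that] False by simp
  have "(\<Sum>\<alpha>\<in>weighted_indices N (Suc m). (real ((2 * k + 1) * \<alpha> k) * miwa_weight N \<alpha>) *\<^sub>R Dpow D N \<alpha> f) = 0"
    by (intro sum.neutral ballI) (simp add: vanish)
  then show ?thesis
    using False by simp
qed

text \<open>The Miwa shift is \<open>exp (\<Sum>\<^sub>k 2 \<lambda>\<^bsup>2k+1\<^esup>/(2k+1) D\<^sub>k)\<close>; this recurrence is its derivative in
  \<open>\<lambda>\<close>.\<close>

lemma P_recurrence: "real (Suc m) *\<^sub>R P (Suc m) f = (\<Sum>k\<le>m div 2. 2 *\<^sub>R D k (P (m - 2 * k) f))"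
proof -
  define N where "N = Suc m"
  have P_Suc: "P (Suc m) f = (\<Sum>\<alpha>\<in>weighted_indices N (Suc m). miwa_weight N \<alpha> *\<^sub>R Dpow D N \<alpha> f)"
    by (rule P_extend) (simp add: N_def)
  have "real (Suc m) *\<^sub>R P (Suc m) f
      = (\<Sum>\<alpha>\<in>weighted_indices N (Suc m). \<Sum>k<N. (real ((2 * k + 1) * \<alpha> k) * miwa_weight N \<alpha>) *\<^sub>R Dpow D N \<alpha> f)"
    unfolding P_Suc scaleR_sum_right
  proof (rule sum.cong[OF refl])
    fix \<alpha> assume "\<alpha> \<in> weighted_indices N (Suc m)"
    then have "Suc m = (\<Sum>k<N. (2 * k + 1) * \<alpha> k)"
      by (simp add: weighted_indices_def oddwt_def)
    then have "real (Suc m) = (\<Sum>k<N. real ((2 * k + 1) * \<alpha> k))"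
      by (metis of_nat_sum)
    then show "real (Suc m) *\<^sub>R miwa_weight N \<alpha> *\<^sub>R Dpow D N \<alpha> f
        = (\<Sum>k<N. (real ((2 * k + 1) * \<alpha> k) * miwa_weight N \<alpha>) *\<^sub>R Dpow D N \<alpha> f)"
      by (simp add: scaleR_sum_left sum_distrib_right)
  qed
  also have "\<dots> = (\<Sum>k<N. if 2 * k \<le> m then 2 *\<^sub>R D k (P (m - 2 * k) f) else 0)"
    by (subst sum.swap, rule sum.cong[OF refl], rule weighted_sum_component) (simp_all add: N_def)
  also have "\<dots> = (\<Sum>k\<in>{k \<in> {..<N}. 2 * k \<le> m}. 2 *\<^sub>R D k (P (m - 2 * k) f))"
    by (rule sum.inter_filter[symmetric]) simp
  also have "{k \<in> {..<N}. 2 * k \<le> m} = {..m div 2}"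
    by (auto simp: N_def)
  finally show ?thesis .
qed

lemma P_one: "P m 1 = (if m = 0 then 1 else 0)"
proof (induction m rule: nat_less_induct)
  case (1 m)
  show ?case
  proof (cases m)
    case 0 then show ?thesis by simp
  next
    case (Suc n)
    have "real (Suc n) *\<^sub>R P (Suc n) 1 = (\<Sum>k\<le>n div 2. 2 *\<^sub>R D k (P (n - 2 * k) 1))"
      by (rule P_recurrence)
    also have "\<dots> = 0"
    proof (rule sum.neutral, rule ballI)
      fix k assume "k \<in> {..n div 2}"
      have "P (n - 2 * k) 1 = (if n - 2 * k = 0 then 1 else 0)" using 1 Suc by simp
      then show "2 *\<^sub>R D k (P (n - 2 * k) 1) = 0" by simp
    qed
    finally show ?thesis using Suc by simp
  qed
qed

lemma P_recurrence_convolution_left: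
  "(\<Sum>k\<le>n div 2. \<Sum>j\<le>n - 2 * k. 2 *\<^sub>R (D k (P j f) * P (n - (j + 2 * k)) g))
    = (\<Sum>a\<le>Suc n. (real a *\<^sub>R P a f) * P (Suc n - a) g)"
proof -
  have "(\<Sum>k\<le>n div 2. \<Sum>j\<le>n - 2 * k. 2 *\<^sub>R (D k (P j f) * P (n - (j + 2 * k)) g))
      = (\<Sum>a\<le>n. \<Sum>k\<le>a div 2. 2 *\<^sub>R (D k (P (a - 2 * k) f) * P (n - a) g))"
    using sum_triangle_div2_swap_shift[of "\<lambda>a k. 2 *\<^sub>R (D k (P (a - 2 * k) f) * P (n - a) g)" n] by simp
  also have "\<dots> = (\<Sum>a\<le>n. (real (Suc a) *\<^sub>R P (Suc a) f) * P (n - a) g)"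
    by (rule sum.cong[OF refl]) (simp only: P_recurrence sum_distrib_right mult_scaleR_left)
  also have "\<dots> = (\<Sum>a\<le>Suc n. (real a *\<^sub>R P a f) * P (Suc n - a) g)"
    by (subst sum.atMost_Suc_shift) simp
  finally show ?thesis .
qed

lemma P_recurrence_convolution_right:
  "(\<Sum>k\<le>n div 2. \<Sum>j\<le>n - 2 * k. 2 *\<^sub>R (P j f * D k (P (n - j - 2 * k) g)))
    = (\<Sum>a\<le>Suc n. P a f * (real (Suc n - a) *\<^sub>R P (Suc n - a) g))"
proof -
  have "(\<Sum>k\<le>n div 2. \<Sum>j\<le>n - 2 * k. 2 *\<^sub>R (P j f * D k (P (n - j - 2 * k) g)))
      = (\<Sum>a\<le>n. \<Sum>k\<le>(n - a) div 2. 2 *\<^sub>R (P a f * D k (P (n - a - 2 * k) g)))"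
    using sum_triangle_div2_swap[of "\<lambda>a k. 2 *\<^sub>R (P a f * D k (P (n - a - 2 * k) g))" n] by simp
  also have "\<dots> = (\<Sum>a\<le>n. P a f * (real (Suc (n - a)) *\<^sub>R P (Suc (n - a)) g))"
    by (rule sum.cong[OF refl]) (simp only: P_recurrence sum_distrib_left mult_scaleR_right)
  also have "\<dots> = (\<Sum>a\<le>Suc n. P a f * (real (Suc n - a) *\<^sub>R P (Suc n - a) g))"
    by (simp only: sum.atMost_Suc diff_self_eq_0 of_nat_0 scaleR_zero_left mult_zero_right add_0_right)
      (rule sum.cong[OF refl], simp add: Suc_diff_le)
  finally show ?thesis .
qed

lemma P_mult: "P m (f * g) = (\<Sum>a\<le>m. P a f * P (m - a) g)"
proof (induction m rule: nat_less_induct)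
  case (1 m)
  show ?case
  proof (cases m)
    case (Suc n)
    have "real (Suc n) *\<^sub>R P (Suc n) (f * g) = (\<Sum>k\<le>n div 2. 2 *\<^sub>R D k (P (n - 2 * k) (f * g)))"
      by (rule P_recurrence)
    also have "\<dots> = (\<Sum>k\<le>n div 2. \<Sum>j\<le>n - 2 * k. 2 *\<^sub>R (D k (P j f) * P (n - (j + 2 * k)) g)
        + 2 *\<^sub>R (P j f * D k (P (n - j - 2 * k) g)))"
    proof (rule sum.cong[OF refl])
      fix k assume "k \<in> {..n div 2}"
      have "P (n - 2 * k) (f * g) = (\<Sum>a\<le>n - 2 * k. P a f * P (n - 2 * k - a) g)"
        using 1 Suc by simp
      then show "2 *\<^sub>R D k (P (n - 2 * k) (f * g)) = (\<Sum>j\<le>n - 2 * k. 2 *\<^sub>R (D k (P j f) * P (n - (j + 2 * k)) g)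
          + 2 *\<^sub>R (P j f * D k (P (n - j - 2 * k) g)))"
        by (simp add: D_sum D_mult scaleR_sum_right scaleR_add_right sum.distrib diff_diff_add add.commute)
    qed
    also have "\<dots> = (\<Sum>a\<le>Suc n. (real a *\<^sub>R P a f) * P (Suc n - a) g + P a f * (real (Suc n - a) *\<^sub>R P (Suc n - a) g))"
      unfolding sum.distrib P_recurrence_convolution_left P_recurrence_convolution_right ..
    also have "\<dots> = real (Suc n) *\<^sub>R (\<Sum>a\<le>Suc n. P a f * P (Suc n - a) g)"
      unfolding scaleR_sum_right
    proof (rule sum.cong[OF refl])
      fix a assume "a \<in> {..Suc n}"
      then have "real (Suc n) = real a + real (Suc n - a)" by simp
      then show "(real a *\<^sub>R P a f) * P (Suc n - a) g + P a f * (real (Suc n - a) *\<^sub>R P (Suc n - a) g)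
          = real (Suc n) *\<^sub>R (P a f * P (Suc n - a) g)"
        by (simp only: scaleR_add_left mult_scaleR_left mult_scaleR_right)
    qed
    finally show ?thesis using Suc by simp
  qed simp
qed

end

section \<open>The bilinear identity at Miwa-shifted times\<close>

definition subindices :: "(nat \<Rightarrow> nat) \<Rightarrow> (nat \<Rightarrow> nat) set" where
  "subindices \<alpha> = {\<beta>. \<forall>k. \<beta> k \<le> \<alpha> k}"

definition index_diff :: "(nat \<Rightarrow> nat) \<Rightarrow> (nat \<Rightarrow> nat) \<Rightarrow> (nat \<Rightarrow> nat)" where
  "index_diff \<alpha> \<beta> = (\<lambda>k. \<alpha> k - \<beta> k)"

definition multinomial_weight :: "nat \<Rightarrow> (nat \<Rightarrow> nat) \<Rightarrow> (nat \<Rightarrow> nat) \<Rightarrow> real" where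
  "multinomial_weight N \<beta> \<gamma> = inverse (mfact N \<beta> * mfact N \<gamma>)"

lemma finite_subindices:
  assumes "\<And>i. i \<ge> N \<Longrightarrow> \<alpha> i = 0"
  shows "finite (subindices \<alpha>)"
proof (rule finite_subset)
  let ?M = "\<Sum>i<N. \<alpha> i"
  show "subindices \<alpha> \<subseteq> {f. \<forall>x. (x \<in> {..<N} \<longrightarrow> f x \<in> {..?M}) \<and> (x \<notin> {..<N} \<longrightarrow> f x = 0)}"
  proof (intro subsetI CollectI allI conjI impI)
    fix f x assume f: "f \<in> subindices \<alpha>" and x: "x \<in> {..<N}"
    have "f x \<le> \<alpha> x" using f by (simp add: subindices_def)
    also have "\<alpha> x \<le> ?M" by (rule member_le_sum) (use x in auto)
    finally show "f x \<in> {..?M}" by simp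
  next
    fix f x assume "f \<in> subindices \<alpha>" and "x \<notin> {..<N}"
    then show "f x = 0" using assms[of x] by (simp add: subindices_def) (metis le_zero_eq)
  qed
  show "finite {f. \<forall>x. (x \<in> {..<N} \<longrightarrow> f x \<in> {..?M}) \<and> (x \<notin> {..<N} \<longrightarrow> f x = (0::nat))}"
    by (rule finite_set_of_finite_funs) auto
qed

lemma mfact_incr:
  assumes "k < N"
  shows "mfact N (\<beta>(k := \<beta> k + 1)) = real (\<beta> k + 1) * mfact N \<beta>"
proof -
  have k: "k \<in> {..<N}" using assms by simp
  define R where "R = (\<Prod>i\<in>{..<N}-{k}. fact (\<beta> i) :: real)"
  have "mfact N (\<beta>(k := \<beta> k + 1)) = fact (\<beta> k + 1) * R"
    unfolding mfact_def R_def by (subst prod.remove[OF _ k]) (auto intro!: prod.cong)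
  moreover have "mfact N \<beta> = fact (\<beta> k) * R"
    unfolding mfact_def R_def by (subst prod.remove[OF _ k]) auto
  ultimately show ?thesis by (simp add: fact_Suc)
qed

lemma multinomial_weight_incr:
  assumes "k < N"
  shows "real (\<beta> k + 1) * multinomial_weight N (\<beta>(k := \<beta> k + 1)) \<gamma> = multinomial_weight N \<beta> \<gamma>"
    and "real (\<gamma> k + 1) * multinomial_weight N \<beta> (\<gamma>(k := \<gamma> k + 1)) = multinomial_weight N \<beta> \<gamma>"
  unfolding multinomial_weight_def mfact_incr[OF assms] by (simp_all add: inverse_mult_distrib)

lemma subindices_incr_left:
  fixes H :: "(nat \<Rightarrow> nat) \<Rightarrow> (nat \<Rightarrow> nat) \<Rightarrow> 'a::real_vector"
  assumes supp: "\<And>i. i \<ge> N \<Longrightarrow> \<alpha> i = 0" and kN: "k < N"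
  shows "(\<Sum>\<beta>\<in>subindices (\<alpha>(k := \<alpha> k + 1)).
      (real (\<beta> k) * multinomial_weight N \<beta> (index_diff (\<alpha>(k := \<alpha> k + 1)) \<beta>))
        *\<^sub>R H \<beta> (index_diff (\<alpha>(k := \<alpha> k + 1)) \<beta>))
    = (\<Sum>\<beta>\<in>subindices \<alpha>. multinomial_weight N \<beta> (index_diff \<alpha> \<beta>) *\<^sub>R H (\<beta>(k := \<beta> k + 1)) (index_diff \<alpha> \<beta>))"
proof -
  let ?\<alpha>' = "\<alpha>(k := \<alpha> k + 1)"
  let ?incr = "\<lambda>\<beta>. \<beta>(k := \<beta> k + 1)"
  have fin: "finite (subindices ?\<alpha>')"
    using supp kN by (intro finite_subindices[of N]) simp
  have "(\<Sum>\<beta>\<in>subindices ?\<alpha>'. (real (\<beta> k) * multinomial_weight N \<beta> (index_diff ?\<alpha>' \<beta>)) *\<^sub>R H \<beta> (index_diff ?\<alpha>' \<beta>))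
      = (\<Sum>\<beta>\<in>?incr ` subindices \<alpha>. (real (\<beta> k) * multinomial_weight N \<beta> (index_diff ?\<alpha>' \<beta>)) *\<^sub>R H \<beta> (index_diff ?\<alpha>' \<beta>))"
  proof (rule sum.mono_neutral_right[OF fin])
    show "?incr ` subindices \<alpha> \<subseteq> subindices ?\<alpha>'"
      by (auto simp: subindices_def)
    have "\<beta> k = 0" if "\<beta> \<in> subindices ?\<alpha>' - ?incr ` subindices \<alpha>" for \<beta>
    proof (rule ccontr)
      assume "\<beta> k \<noteq> 0"
      then have "\<beta> = ?incr (\<beta>(k := \<beta> k - 1))"
        by (auto simp: fun_eq_iff)
      moreover have "(\<beta>(k := \<beta> k - 1)) i \<le> \<alpha> i" for i
        using that[unfolded subindices_def] by (cases "i = k") (auto dest: spec[of _ i])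
      then have "\<beta>(k := \<beta> k - 1) \<in> subindices \<alpha>"
        by (simp only: subindices_def mem_Collect_eq) blast
      ultimately show False using that by blast
    qed
    then show "\<forall>\<beta>\<in>subindices ?\<alpha>' - ?incr ` subindices \<alpha>.
        (real (\<beta> k) * multinomial_weight N \<beta> (index_diff ?\<alpha>' \<beta>)) *\<^sub>R H \<beta> (index_diff ?\<alpha>' \<beta>) = 0"
      by simp
  qed
  also have "\<dots> = (\<Sum>\<beta>\<in>subindices \<alpha>. (real (?incr \<beta> k) * multinomial_weight N (?incr \<beta>) (index_diff ?\<alpha>' (?incr \<beta>)))
      *\<^sub>R H (?incr \<beta>) (index_diff ?\<alpha>' (?incr \<beta>)))"
    by (rule sum.reindex[unfolded comp_def]) (auto intro!: inj_onI simp: fun_eq_iff split: if_splits)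
  also have "\<dots> = (\<Sum>\<beta>\<in>subindices \<alpha>. multinomial_weight N \<beta> (index_diff \<alpha> \<beta>) *\<^sub>R H (?incr \<beta>) (index_diff \<alpha> \<beta>))"
  proof (rule sum.cong[OF refl])
    fix \<beta>
    have "index_diff ?\<alpha>' (?incr \<beta>) = index_diff \<alpha> \<beta>"
      by (auto simp: index_diff_def)
    then show "(real (?incr \<beta> k) * multinomial_weight N (?incr \<beta>) (index_diff ?\<alpha>' (?incr \<beta>)))
        *\<^sub>R H (?incr \<beta>) (index_diff ?\<alpha>' (?incr \<beta>))
      = multinomial_weight N \<beta> (index_diff \<alpha> \<beta>) *\<^sub>R H (?incr \<beta>) (index_diff \<alpha> \<beta>)"
      using multinomial_weight_incr(1)[OF kN] by simp
  qed
  finally show ?thesis .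
qed

lemma subindices_incr_right:
  fixes H :: "(nat \<Rightarrow> nat) \<Rightarrow> (nat \<Rightarrow> nat) \<Rightarrow> 'a::real_vector"
  assumes supp: "\<And>i. i \<ge> N \<Longrightarrow> \<alpha> i = 0" and kN: "k < N"
  shows "(\<Sum>\<beta>\<in>subindices (\<alpha>(k := \<alpha> k + 1)).
      (real (index_diff (\<alpha>(k := \<alpha> k + 1)) \<beta> k) * multinomial_weight N \<beta> (index_diff (\<alpha>(k := \<alpha> k + 1)) \<beta>))
        *\<^sub>R H \<beta> (index_diff (\<alpha>(k := \<alpha> k + 1)) \<beta>))
    = (\<Sum>\<beta>\<in>subindices \<alpha>. multinomial_weight N \<beta> (index_diff \<alpha> \<beta>)
      *\<^sub>R H \<beta> ((index_diff \<alpha> \<beta>)(k := index_diff \<alpha> \<beta> k + 1)))"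
proof -
  let ?\<alpha>' = "\<alpha>(k := \<alpha> k + 1)"
  have fin: "finite (subindices ?\<alpha>')"
    using supp kN by (intro finite_subindices[of N]) simp
  have "(\<Sum>\<beta>\<in>subindices ?\<alpha>'. (real (index_diff ?\<alpha>' \<beta> k) * multinomial_weight N \<beta> (index_diff ?\<alpha>' \<beta>))
      *\<^sub>R H \<beta> (index_diff ?\<alpha>' \<beta>))
    = (\<Sum>\<beta>\<in>subindices \<alpha>. (real (index_diff ?\<alpha>' \<beta> k) * multinomial_weight N \<beta> (index_diff ?\<alpha>' \<beta>))
      *\<^sub>R H \<beta> (index_diff ?\<alpha>' \<beta>))"
  proof (rule sum.mono_neutral_right[OF fin])
    show "subindices \<alpha> \<subseteq> subindices ?\<alpha>'"
      by (auto simp: subindices_def le_SucI)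
    have "index_diff ?\<alpha>' \<beta> k = 0" if "\<beta> \<in> subindices ?\<alpha>' - subindices \<alpha>" for \<beta>
    proof -
      from that obtain i where "\<beta> i > \<alpha> i"
        by (auto simp: subindices_def not_le)
      moreover have "\<beta> i \<le> ?\<alpha>' i"
        using that by (simp add: subindices_def)
      ultimately show ?thesis by (cases "i = k") (auto simp: index_diff_def)
    qed
    then show "\<forall>\<beta>\<in>subindices ?\<alpha>' - subindices \<alpha>. (real (index_diff ?\<alpha>' \<beta> k)
        * multinomial_weight N \<beta> (index_diff ?\<alpha>' \<beta>)) *\<^sub>R H \<beta> (index_diff ?\<alpha>' \<beta>) = 0"
      by simp
  qed
  also have "\<dots> = (\<Sum>\<beta>\<in>subindices \<alpha>. multinomial_weight N \<beta> (index_diff \<alpha> \<beta>)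
      *\<^sub>R H \<beta> ((index_diff \<alpha> \<beta>)(k := index_diff \<alpha> \<beta> k + 1)))"
  proof (rule sum.cong[OF refl])
    fix \<beta> assume "\<beta> \<in> subindices \<alpha>"
    then have diff: "index_diff ?\<alpha>' \<beta> = (index_diff \<alpha> \<beta>)(k := index_diff \<alpha> \<beta> k + 1)"
      by (auto simp: index_diff_def subindices_def Suc_diff_le)
    have "real (index_diff ?\<alpha>' \<beta> k) * multinomial_weight N \<beta> (index_diff ?\<alpha>' \<beta>)
        = multinomial_weight N \<beta> (index_diff \<alpha> \<beta>)"
      unfolding diff fun_upd_same by (rule multinomial_weight_incr(2)[OF kN])
    with diff show "(real (index_diff ?\<alpha>' \<beta> k) * multinomial_weight N \<beta> (index_diff ?\<alpha>' \<beta>)) *\<^sub>R H \<beta> (index_diff ?\<alpha>' \<beta>)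
      = multinomial_weight N \<beta> (index_diff \<alpha> \<beta>) *\<^sub>R H \<beta> ((index_diff \<alpha> \<beta>)(k := index_diff \<alpha> \<beta> k + 1))"
      by (simp del: fun_upd_apply)
  qed
  finally show ?thesis .
qed

lemma subindices_pascal:
  fixes H :: "(nat \<Rightarrow> nat) \<Rightarrow> (nat \<Rightarrow> nat) \<Rightarrow> 'a::real_vector"
  assumes supp: "\<And>i. i \<ge> N \<Longrightarrow> \<alpha> i = 0" and kN: "k < N"
  defines "\<alpha>' \<equiv> \<alpha>(k := \<alpha> k + 1)"
  shows "real (\<alpha> k + 1) *\<^sub>R (\<Sum>\<beta>\<in>subindices \<alpha>'. multinomial_weight N \<beta> (index_diff \<alpha>' \<beta>) *\<^sub>R H \<beta> (index_diff \<alpha>' \<beta>))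
    = (\<Sum>\<beta>\<in>subindices \<alpha>. multinomial_weight N \<beta> (index_diff \<alpha> \<beta>) *\<^sub>R
        (H (\<beta>(k := \<beta> k + 1)) (index_diff \<alpha> \<beta>) + H \<beta> ((index_diff \<alpha> \<beta>)(k := index_diff \<alpha> \<beta> k + 1))))"
proof -
  have "real (\<alpha> k + 1) *\<^sub>R (\<Sum>\<beta>\<in>subindices \<alpha>'. multinomial_weight N \<beta> (index_diff \<alpha>' \<beta>) *\<^sub>R H \<beta> (index_diff \<alpha>' \<beta>))
      = (\<Sum>\<beta>\<in>subindices \<alpha>'. (real (\<beta> k) * multinomial_weight N \<beta> (index_diff \<alpha>' \<beta>)) *\<^sub>R H \<beta> (index_diff \<alpha>' \<beta>)
          + (real (index_diff \<alpha>' \<beta> k) * multinomial_weight N \<beta> (index_diff \<alpha>' \<beta>)) *\<^sub>R H \<beta> (index_diff \<alpha>' \<beta>))"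
    unfolding scaleR_sum_right
  proof (rule sum.cong[OF refl])
    fix \<beta> assume "\<beta> \<in> subindices \<alpha>'"
    then have "\<beta> k \<le> \<alpha>' k" by (simp add: subindices_def)
    then have "real (\<alpha> k + 1) = real (\<beta> k) + real (index_diff \<alpha>' \<beta> k)"
      by (simp add: index_diff_def \<alpha>'_def)
    then show "real (\<alpha> k + 1) *\<^sub>R multinomial_weight N \<beta> (index_diff \<alpha>' \<beta>) *\<^sub>R H \<beta> (index_diff \<alpha>' \<beta>)
      = (real (\<beta> k) * multinomial_weight N \<beta> (index_diff \<alpha>' \<beta>)) *\<^sub>R H \<beta> (index_diff \<alpha>' \<beta>)
        + (real (index_diff \<alpha>' \<beta> k) * multinomial_weight N \<beta> (index_diff \<alpha>' \<beta>)) *\<^sub>R H \<beta> (index_diff \<alpha>' \<beta>)"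
      by (simp only: scaleR_scaleR distrib_right scaleR_add_left)
  qed
  also have "\<dots> = (\<Sum>\<beta>\<in>subindices \<alpha>. multinomial_weight N \<beta> (index_diff \<alpha> \<beta>) *\<^sub>R H (\<beta>(k := \<beta> k + 1)) (index_diff \<alpha> \<beta>))
      + (\<Sum>\<beta>\<in>subindices \<alpha>. multinomial_weight N \<beta> (index_diff \<alpha> \<beta>)
          *\<^sub>R H \<beta> ((index_diff \<alpha> \<beta>)(k := index_diff \<alpha> \<beta> k + 1)))"
    unfolding sum.distrib \<alpha>'_def
    using subindices_incr_left[where \<alpha>=\<alpha> and N=N and k=k and H=H, OF supp kN]
      subindices_incr_right[where \<alpha>=\<alpha> and N=N and k=k and H=H, OF supp kN] by (simp only:)
  finally show ?thesis
    by (simp add: scaleR_add_right sum.distrib)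
qed

text \<open>\<open>e\<^bsup>\<xi>~(2[\<lambda>], z)\<^esup> = (1 + \<lambda>z)/(1 - \<lambda>z) = \<Sum>\<^sub>j miwa_exp_coeff j (\<lambda>z)\<^sup>j\<close>.\<close>

definition miwa_exp_coeff :: "nat \<Rightarrow> real" where
  "miwa_exp_coeff j = (if j = 0 then 1 else 2)"

lemma miwa_exp_coeff_recurrence:
  "real (Suc m) * miwa_exp_coeff (Suc m) = (\<Sum>k\<le>m div 2. 2 * miwa_exp_coeff (m - 2 * k))"
proof (induction m rule: nat_less_induct)
  case (1 m)
  show ?case
  proof (cases "m < 2")
    case True
    then have "m = 0 \<or> m = 1" by auto
    then show ?thesis by (auto simp: miwa_exp_coeff_def)
  next
    case False
    then obtain n where m: "m = Suc (Suc n)"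
      by (metis add_2_eq_Suc less_iff_Suc_add not_less_eq)
    then have "m div 2 = Suc (n div 2)" by simp
    then have "(\<Sum>k\<le>m div 2. 2 * miwa_exp_coeff (m - 2 * k))
        = 2 * miwa_exp_coeff m + (\<Sum>k\<le>n div 2. 2 * miwa_exp_coeff (n - 2 * k))"
      by (simp only: sum.atMost_Suc_shift) (simp add: m)
    also have "\<dots> = 2 * miwa_exp_coeff m + real (Suc n) * miwa_exp_coeff (Suc n)"
      using 1 m by simp
    finally show ?thesis using m by (simp add: miwa_exp_coeff_def)
  qed
qed

lemma miwa_exp_coeff_sum: "(\<Sum>j\<le>n. miwa_exp_coeff j *\<^sub>R f j) = 2 *\<^sub>R (\<Sum>j\<le>n. f j) - (f 0 :: 'a::real_vector)"
proof -
  have "(\<Sum>j\<le>n. miwa_exp_coeff j *\<^sub>R f j) = (\<Sum>j\<le>n. 2 *\<^sub>R f j - (if j = 0 then f j else 0))"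
    by (rule sum.cong) (auto simp: miwa_exp_coeff_def scaleR_2)
  then show ?thesis
    by (simp add: sum_subtractf scaleR_sum_right)
qed

definition linear_op :: "((nat \<Rightarrow> 'a::real_vector) \<Rightarrow> nat \<Rightarrow> 'a) \<Rightarrow> bool" where
  "linear_op Op \<longleftrightarrow>
     (\<forall>g h m. Op (\<lambda>n. g n + h n) m = Op g m + Op h m) \<and> (\<forall>c g m. Op (\<lambda>n. c *\<^sub>R g n) m = c *\<^sub>R Op g m)"

lemma linear_op_add: "linear_op Op \<Longrightarrow> Op (\<lambda>n. g n + h n) m = Op g m + Op h m"
  by (simp add: linear_op_def)

lemma linear_op_scaleR: "linear_op Op \<Longrightarrow> Op (\<lambda>n. c *\<^sub>R g n) m = c *\<^sub>R Op g m"
  by (simp add: linear_op_def)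

lemma linear_op_zero: "linear_op Op \<Longrightarrow> Op (\<lambda>n. 0) m = 0"
  using linear_op_scaleR[of Op 0 "\<lambda>_. 0" m] by simp

lemma linear_op_sum: "linear_op Op \<Longrightarrow> Op (\<lambda>n. \<Sum>x\<in>A. g x n) m = (\<Sum>x\<in>A. Op (g x) m)"
proof (induction A rule: infinite_finite_induct)
  case (insert x F)
  have "Op (\<lambda>n. g x n + (\<Sum>y\<in>F. g y n)) m = Op (g x) m + Op (\<lambda>n. \<Sum>y\<in>F. g y n) m"
    by (rule linear_op_add[OF insert.prems])
  then show ?case using insert by simp
qed (simp_all add: linear_op_zero)

text \<open>With \<open>Op\<close> the residue pairing against \<open>w~\<close>, \<open>bilinear_coeff N Op w \<alpha> b\<close> is the coefficient of
  \<open>y\<^sup>\<alpha> \<lambda>\<^sup>b\<close> in \<open>res\<^sub>z [w(t\<^sub>o + y + 2[\<lambda>], z) e\<^bsup>\<xi>~(y, z)\<^esup> e\<^bsup>\<xi>~(2[\<lambda>], z)\<^esup> w~(t\<^sub>o, z)]\<close>.\<close>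

context commuting_derivations
begin

definition shifted_pairing ::
    "nat \<Rightarrow> ((nat \<Rightarrow> 'r) \<Rightarrow> nat \<Rightarrow> 'r) \<Rightarrow> (nat \<Rightarrow> 'r) \<Rightarrow> (nat \<Rightarrow> nat) \<Rightarrow> (nat \<Rightarrow> nat) \<Rightarrow> nat \<Rightarrow> 'r" where
  "shifted_pairing N Op w \<beta> \<gamma> b =
     (\<Sum>j\<le>b. miwa_exp_coeff j *\<^sub>R Op (\<lambda>n. P (b - j) (Dpow D N \<beta> (w n))) (oddwt N \<gamma> + j))"

definition bilinear_coeff ::
    "nat \<Rightarrow> ((nat \<Rightarrow> 'r) \<Rightarrow> nat \<Rightarrow> 'r) \<Rightarrow> (nat \<Rightarrow> 'r) \<Rightarrow> (nat \<Rightarrow> nat) \<Rightarrow> nat \<Rightarrow> 'r" where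
  "bilinear_coeff N Op w \<alpha> b =
     (\<Sum>\<beta>\<in>subindices \<alpha>. multinomial_weight N \<beta> (index_diff \<alpha> \<beta>) *\<^sub>R shifted_pairing N Op w \<beta> (index_diff \<alpha> \<beta>) b)"

text \<open>Differentiating \<open>shifted_pairing\<close> in \<open>\<lambda>\<close>: the derivative falls either on the Miwa shift of \<open>w\<close>
  (\<open>shifted_pairing_recurrence_shift\<close>) or on \<open>e\<^bsup>\<xi>~(2[\<lambda>], z)\<^esup>\<close> (\<open>shifted_pairing_recurrence_exp\<close>);
  both are expressed by raising one index.\<close>

lemma shifted_pairing_recurrence_shift:
  assumes Op: "linear_op Op" and bN: "b div 2 < N"
  shows "(\<Sum>j\<le>Suc b. miwa_exp_coeff j *\<^sub>R Op (\<lambda>n. real (Suc b - j) *\<^sub>R P (Suc b - j) (Dpow D N \<beta> (w n))) (oddwt N \<gamma> + j))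
    = (\<Sum>k\<le>b div 2. 2 *\<^sub>R shifted_pairing N Op w (\<beta>(k := \<beta> k + 1)) \<gamma> (b - 2 * k))"
proof -
  define X where "X n = Dpow D N \<beta> (w n)" for n
  define m where "m = oddwt N \<gamma>"
  let ?\<beta>' = "\<lambda>k. \<beta>(k := \<beta> k + 1)"
  have "(\<Sum>j\<le>Suc b. miwa_exp_coeff j *\<^sub>R Op (\<lambda>n. real (Suc b - j) *\<^sub>R P (Suc b - j) (X n)) (m + j))
      = (\<Sum>j\<le>b. miwa_exp_coeff j *\<^sub>R Op (\<lambda>n. real (Suc (b - j)) *\<^sub>R P (Suc (b - j)) (X n)) (m + j))"
    by (simp only: sum.atMost_Suc diff_self_eq_0 of_nat_0 scaleR_zero_left linear_op_zero[OF Op]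
        scaleR_zero_right add_0_right)
      (rule sum.cong[OF refl], simp only: Suc_diff_le atMost_iff)
  also have "\<dots> = (\<Sum>j\<le>b. \<Sum>k\<le>(b - j) div 2.
      miwa_exp_coeff j *\<^sub>R 2 *\<^sub>R Op (\<lambda>n. P (b - 2 * k - j) (Dpow D N (?\<beta>' k) (w n))) (m + j))"
  proof (rule sum.cong[OF refl])
    fix j assume j: "j \<in> {..b}"
    have "real (Suc (b - j)) *\<^sub>R P (Suc (b - j)) (X n)
        = (\<Sum>k\<le>(b - j) div 2. 2 *\<^sub>R P (b - 2 * k - j) (Dpow D N (?\<beta>' k) (w n)))" for n
      unfolding P_recurrence
    proof (rule sum.cong[OF refl])
      fix k assume "k \<in> {..(b - j) div 2}"
      then have kN: "k < N" using bN j by auto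
      have e: "b - 2 * k - j = b - j - 2 * k" by simp
      show "2 *\<^sub>R D k (P (b - j - 2 * k) (X n)) = 2 *\<^sub>R P (b - 2 * k - j) (Dpow D N (?\<beta>' k) (w n))"
        unfolding e Dpow_incr[OF kN] P_D_commute X_def ..
    qed
    then show "miwa_exp_coeff j *\<^sub>R Op (\<lambda>n. real (Suc (b - j)) *\<^sub>R P (Suc (b - j)) (X n)) (m + j)
        = (\<Sum>k\<le>(b - j) div 2. miwa_exp_coeff j *\<^sub>R 2 *\<^sub>R Op (\<lambda>n. P (b - 2 * k - j) (Dpow D N (?\<beta>' k) (w n))) (m + j))"
      by (simp add: linear_op_sum[OF Op] linear_op_scaleR[OF Op] scaleR_sum_right)
  qed
  also have "\<dots> = (\<Sum>k\<le>b div 2. \<Sum>j\<le>b - 2 * k.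
      miwa_exp_coeff j *\<^sub>R 2 *\<^sub>R Op (\<lambda>n. P (b - 2 * k - j) (Dpow D N (?\<beta>' k) (w n))) (m + j))"
    by (rule sum_triangle_div2_swap)
  also have "\<dots> = (\<Sum>k\<le>b div 2. 2 *\<^sub>R shifted_pairing N Op w (?\<beta>' k) \<gamma> (b - 2 * k))"
    unfolding shifted_pairing_def m_def scaleR_sum_right by (simp add: scaleR_left_commute mult.commute)
  finally show ?thesis
    unfolding X_def m_def .
qed

lemma shifted_pairing_recurrence_exp:
  assumes "b div 2 < N"
  shows "(\<Sum>j\<le>Suc b. (real j * miwa_exp_coeff j) *\<^sub>R Op (\<lambda>n. P (Suc b - j) (Dpow D N \<beta> (w n))) (oddwt N \<gamma> + j))
    = (\<Sum>k\<le>b div 2. 2 *\<^sub>R shifted_pairing N Op w \<beta> (\<gamma>(k := \<gamma> k + 1)) (b - 2 * k))"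
proof -
  define X where "X n = Dpow D N \<beta> (w n)" for n
  define m where "m = oddwt N \<gamma>"
  have "(\<Sum>j\<le>Suc b. (real j * miwa_exp_coeff j) *\<^sub>R Op (\<lambda>n. P (Suc b - j) (X n)) (m + j))
      = (\<Sum>j\<le>b. (real (Suc j) * miwa_exp_coeff (Suc j)) *\<^sub>R Op (\<lambda>n. P (b - j) (X n)) (m + Suc j))"
    by (subst sum.atMost_Suc_shift) simp
  also have "\<dots> = (\<Sum>j\<le>b. \<Sum>k\<le>j div 2. (2 * miwa_exp_coeff (j - 2 * k)) *\<^sub>R Op (\<lambda>n. P (b - j) (X n)) (m + Suc j))"
    unfolding miwa_exp_coeff_recurrence by (simp add: scaleR_sum_left)
  also have "\<dots> = (\<Sum>k\<le>b div 2. \<Sum>j\<le>b - 2 * k.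
      (2 * miwa_exp_coeff j) *\<^sub>R Op (\<lambda>n. P (b - (j + 2 * k)) (X n)) (m + Suc (j + 2 * k)))"
    using sum_triangle_div2_swap_shift[of
        "\<lambda>j k. (2 * miwa_exp_coeff (j - 2 * k)) *\<^sub>R Op (\<lambda>n. P (b - j) (X n)) (m + Suc j)" b]
    by simp
  also have "\<dots> = (\<Sum>k\<le>b div 2. 2 *\<^sub>R shifted_pairing N Op w \<beta> (\<gamma>(k := \<gamma> k + 1)) (b - 2 * k))"
  proof (rule sum.cong[OF refl])
    fix k assume "k \<in> {..b div 2}"
    then have kN: "k < N" using assms by auto
    show "(\<Sum>j\<le>b - 2 * k. (2 * miwa_exp_coeff j) *\<^sub>R Op (\<lambda>n. P (b - (j + 2 * k)) (X n)) (m + Suc (j + 2 * k)))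
        = 2 *\<^sub>R shifted_pairing N Op w \<beta> (\<gamma>(k := \<gamma> k + 1)) (b - 2 * k)"
      unfolding shifted_pairing_def oddwt_incr[OF kN] m_def[symmetric] X_def[symmetric] scaleR_sum_right
      by (rule sum.cong[OF refl]) (simp add: diff_diff_add add.commute add.left_commute)
  qed
  finally show ?thesis
    unfolding X_def m_def .
qed

lemma shifted_pairing_recurrence:
  assumes Op: "linear_op Op" and bN: "b div 2 < N"
  shows "real (Suc b) *\<^sub>R shifted_pairing N Op w \<beta> \<gamma> (Suc b)
    = (\<Sum>k\<le>b div 2. 2 *\<^sub>R (shifted_pairing N Op w (\<beta>(k := \<beta> k + 1)) \<gamma> (b - 2 * k)
        + shifted_pairing N Op w \<beta> (\<gamma>(k := \<gamma> k + 1)) (b - 2 * k)))"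
proof -
  define X where "X n = Dpow D N \<beta> (w n)" for n
  define m where "m = oddwt N \<gamma>"
  have "real (Suc b) *\<^sub>R shifted_pairing N Op w \<beta> \<gamma> (Suc b)
      = (\<Sum>j\<le>Suc b. miwa_exp_coeff j *\<^sub>R Op (\<lambda>n. real (Suc b - j) *\<^sub>R P (Suc b - j) (X n)) (m + j))
        + (\<Sum>j\<le>Suc b. (real j * miwa_exp_coeff j) *\<^sub>R Op (\<lambda>n. P (Suc b - j) (X n)) (m + j))"
    unfolding shifted_pairing_def X_def[symmetric] m_def[symmetric] scaleR_sum_right sum.distrib[symmetric]
  proof (rule sum.cong[OF refl])
    fix j assume "j \<in> {..Suc b}"
    then have r: "real (Suc b) = real (Suc b - j) + real j" by simp
    show "real (Suc b) *\<^sub>R miwa_exp_coeff j *\<^sub>R Op (\<lambda>n. P (Suc b - j) (X n)) (m + j)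
        = miwa_exp_coeff j *\<^sub>R Op (\<lambda>n. real (Suc b - j) *\<^sub>R P (Suc b - j) (X n)) (m + j)
          + (real j * miwa_exp_coeff j) *\<^sub>R Op (\<lambda>n. P (Suc b - j) (X n)) (m + j)"
      unfolding linear_op_scaleR[OF Op] r by (simp add: scaleR_add_left algebra_simps)
  qed
  then show ?thesis
    unfolding X_def m_def shifted_pairing_recurrence_shift[OF Op bN] shifted_pairing_recurrence_exp[OF bN]
    by (simp add: scaleR_add_right sum.distrib)
qed

lemma bilinear_coeff_recurrence:
  assumes Op: "linear_op Op" and bN: "b div 2 < N" and supp: "\<And>i. i \<ge> N \<Longrightarrow> \<alpha> i = 0"
  shows "real (Suc b) *\<^sub>R bilinear_coeff N Op w \<alpha> (Suc b)
    = (\<Sum>k\<le>b div 2. 2 *\<^sub>R (real (\<alpha> k + 1) *\<^sub>R bilinear_coeff N Op w (\<alpha>(k := \<alpha> k + 1)) (b - 2 * k)))"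
proof -
  let ?c = "multinomial_weight N" and ?Q = "\<lambda>k \<beta> \<gamma>. shifted_pairing N Op w \<beta> \<gamma> (b - 2 * k)"
  let ?incr = "\<lambda>\<beta> k. \<beta>(k := \<beta> k + 1)"
  have "real (Suc b) *\<^sub>R bilinear_coeff N Op w \<alpha> (Suc b)
      = (\<Sum>\<beta>\<in>subindices \<alpha>. ?c \<beta> (index_diff \<alpha> \<beta>) *\<^sub>R
          (real (Suc b) *\<^sub>R shifted_pairing N Op w \<beta> (index_diff \<alpha> \<beta>) (Suc b)))"
    unfolding bilinear_coeff_def scaleR_sum_right by (simp add: scaleR_left_commute mult.commute)
  also have "\<dots> = (\<Sum>\<beta>\<in>subindices \<alpha>. \<Sum>k\<le>b div 2. 2 *\<^sub>R (?c \<beta> (index_diff \<alpha> \<beta>) *\<^sub>R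
      (?Q k (?incr \<beta> k) (index_diff \<alpha> \<beta>) + ?Q k \<beta> (?incr (index_diff \<alpha> \<beta>) k))))"
    unfolding shifted_pairing_recurrence[OF Op bN] scaleR_sum_right by (simp add: scaleR_left_commute mult.commute)
  also have "\<dots> = (\<Sum>k\<le>b div 2. 2 *\<^sub>R (\<Sum>\<beta>\<in>subindices \<alpha>. ?c \<beta> (index_diff \<alpha> \<beta>) *\<^sub>R
      (?Q k (?incr \<beta> k) (index_diff \<alpha> \<beta>) + ?Q k \<beta> (?incr (index_diff \<alpha> \<beta>) k))))"
    unfolding scaleR_sum_right by (rule sum.swap)
  also have "\<dots> = (\<Sum>k\<le>b div 2. 2 *\<^sub>R (real (\<alpha> k + 1) *\<^sub>R bilinear_coeff N Op w (?incr \<alpha> k) (b - 2 * k)))"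
  proof (rule sum.cong[OF refl])
    fix k assume "k \<in> {..b div 2}"
    then have kN: "k < N" using bN by auto
    show "2 *\<^sub>R (\<Sum>\<beta>\<in>subindices \<alpha>. ?c \<beta> (index_diff \<alpha> \<beta>) *\<^sub>R
        (?Q k (?incr \<beta> k) (index_diff \<alpha> \<beta>) + ?Q k \<beta> (?incr (index_diff \<alpha> \<beta>) k)))
      = 2 *\<^sub>R (real (\<alpha> k + 1) *\<^sub>R bilinear_coeff N Op w (?incr \<alpha> k) (b - 2 * k))"
      unfolding bilinear_coeff_def
      using subindices_pascal[where N=N and \<alpha>=\<alpha> and k=k and H="?Q k", OF supp kN] by simp
  qed
  finally show ?thesis .
qed

lemma bilinear_coeff_eq_0:
  assumes Op: "linear_op Op"
    and base: "\<And>\<alpha>. (\<And>i. i \<ge> N \<Longrightarrow> \<alpha> i = 0) \<Longrightarrow> bilinear_coeff N Op w \<alpha> 0 = 0"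
  shows "b < 2*N \<Longrightarrow> (\<And>i. i \<ge> N \<Longrightarrow> \<alpha> i = 0) \<Longrightarrow> bilinear_coeff N Op w \<alpha> b = 0"
proof (induction b arbitrary: \<alpha> rule: nat_less_induct)
  case (1 b)
  show ?case
  proof (cases b)
    case 0 then show ?thesis using base 1 by simp
  next
    case (Suc b')
    have bN: "b' div 2 < N" using 1 Suc by auto
    have supp: "\<And>i. i \<ge> N \<Longrightarrow> \<alpha> i = 0" by (rule "1.prems"(2))
    have "real (Suc b') *\<^sub>R bilinear_coeff N Op w \<alpha> (Suc b')
      = (\<Sum>k\<le>b' div 2. 2 *\<^sub>R (real (\<alpha> k + 1) *\<^sub>R bilinear_coeff N Op w (\<alpha>(k := \<alpha> k + 1)) (b' - 2 * k)))"
      by (rule bilinear_coeff_recurrence[OF Op bN supp])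
    also have "\<dots> = 0"
    proof (rule sum.neutral, rule ballI)
      fix k assume "k \<in> {..b' div 2}"
      then have kN: "k < N" using bN by auto
      have "bilinear_coeff N Op w (\<alpha>(k := \<alpha> k + 1)) (b' - 2 * k) = 0"
        using 1 Suc kN by auto
      then show "2 *\<^sub>R (real (\<alpha> k + 1) *\<^sub>R bilinear_coeff N Op w (\<alpha>(k := \<alpha> k + 1)) (b' - 2 * k)) = 0" by simp
    qed
    finally show ?thesis using Suc by simp
  qed
qed

end

text \<open>\<open>residue_pairing w~ g m = res\<^sub>z [z\<^sup>m g(z) w~(z)]\<close> for \<open>g(z) = \<Sum>\<^sub>n g\<^sub>n z\<^sup>-\<^sup>n\<close>.\<close>

definition residue_pairing :: "(nat \<Rightarrow> 'r::real_algebra_1) \<Rightarrow> (nat \<Rightarrow> 'r) \<Rightarrow> nat \<Rightarrow> 'r" where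
  "residue_pairing wt g m = (\<Sum>n\<le>m + 1. g n * wt (m + 1 - n))"

lemma linear_op_residue_pairing: "linear_op (residue_pairing wt)"
  unfolding linear_op_def residue_pairing_def
  by (simp add: distrib_right sum.distrib scaleR_sum_right scaleR_add_right)

context commuting_derivations
begin

definition shifted_residue_pairing :: "(nat \<Rightarrow> 'r) \<Rightarrow> nat \<Rightarrow> (nat \<Rightarrow> 'r) \<Rightarrow> nat \<Rightarrow> 'r" where
  "shifted_residue_pairing wt a g m =
     (\<Sum>j\<le>a. miwa_exp_coeff j *\<^sub>R residue_pairing wt (\<lambda>n. P (a - j) (g n)) (m + j))"

lemma linear_op_shifted_residue_pairing: "linear_op (shifted_residue_pairing wt a)"
  unfolding linear_op_def shifted_residue_pairing_def
  by (simp add: P_add P_scaleR linear_op_add[OF linear_op_residue_pairing]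
      linear_op_scaleR[OF linear_op_residue_pairing] sum.distrib scaleR_sum_right scaleR_add_right
      scaleR_left_commute mult.commute)

lemma shifted_pairing_0: "shifted_pairing N Op w \<beta> \<gamma> 0 = Op (\<lambda>n. Dpow D N \<beta> (w n)) (oddwt N \<gamma>)"
  by (simp add: shifted_pairing_def miwa_exp_coeff_def)

lemma bilinear_coeff_residue_0:
  assumes "bilinear_identity D w wt" and "\<And>i. i \<ge> N \<Longrightarrow> \<alpha> i = 0"
  shows "bilinear_coeff N (residue_pairing wt) w \<alpha> 0 = 0"
  using assms unfolding bilinear_identity_def bilinear_coeff_def shifted_pairing_0 residue_pairing_def
    subindices_def index_diff_def multinomial_weight_def by simp

lemma bilinear_coeff_shifted_0:
  "bilinear_coeff N (shifted_residue_pairing wt a) w \<alpha> 0 = bilinear_coeff N (residue_pairing wt) w \<alpha> a"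
  unfolding bilinear_coeff_def shifted_pairing_0 by (simp add: shifted_pairing_def shifted_residue_pairing_def)

text \<open>All coefficients of \<open>res\<^sub>z [w(t\<^sub>o + y + 2[\<lambda>] + 2[\<mu>], z) e\<^bsup>\<xi>~(y, z)\<^esup> e\<^bsup>\<xi>~(2[\<lambda>], z)\<^esup> e\<^bsup>\<xi>~(2[\<mu>], z)\<^esup> w~(t\<^sub>o, z)]\<close>
  vanish: both Miwa shifts are removed by \<open>bilinear_coeff_eq_0\<close>.\<close>

lemma bilinear_coeff_shifted_eq_0:
  assumes bil: "bilinear_identity D w wt" and "a < 2 * N" and "b < 2 * N"
    and supp: "\<And>i. i \<ge> N \<Longrightarrow> \<alpha> i = 0"
  shows "bilinear_coeff N (shifted_residue_pairing wt a) w \<alpha> b = 0"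
proof (rule bilinear_coeff_eq_0[OF linear_op_shifted_residue_pairing _ \<open>b < 2 * N\<close> supp])
  fix \<alpha>' :: "nat \<Rightarrow> nat" assume supp': "\<And>i. i \<ge> N \<Longrightarrow> \<alpha>' i = 0"
  show "bilinear_coeff N (shifted_residue_pairing wt a) w \<alpha>' 0 = 0"
    unfolding bilinear_coeff_shifted_0
    by (rule bilinear_coeff_eq_0[OF linear_op_residue_pairing _ \<open>a < 2 * N\<close> supp'])
      (rule bilinear_coeff_residue_0[OF bil])
qed

lemma bilinear_coeff_zero_index:
  "bilinear_coeff N Op w (\<lambda>_. 0) b = (\<Sum>j\<le>b. miwa_exp_coeff j *\<^sub>R Op (\<lambda>n. P (b - j) (w n)) j)"
proof -
  have "subindices (\<lambda>_. 0) = {\<lambda>_. 0}" by (auto simp: subindices_def)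
  moreover have "index_diff (\<lambda>_. 0) (\<lambda>_. 0) = (\<lambda>_. 0)" by (simp add: index_diff_def)
  ultimately show ?thesis
    by (simp add: bilinear_coeff_def multinomial_weight_def mfact_def oddwt_def shifted_pairing_def)
qed

lemma bilinear_coeff_unit_index:
  assumes "N \<ge> 1"
  shows "bilinear_coeff N Op w ((\<lambda>_. 0)(0 := 1)) b
    = (\<Sum>j\<le>b. miwa_exp_coeff j *\<^sub>R Op (\<lambda>n. P (b - j) (w n)) (1 + j))
      + (\<Sum>j\<le>b. miwa_exp_coeff j *\<^sub>R Op (\<lambda>n. P (b - j) (D 0 (w n))) j)"
proof -
  define e0 where "e0 = ((\<lambda>_. 0)(0 := 1) :: nat \<Rightarrow> nat)"
  have "\<beta> = (\<lambda>_. 0) \<or> \<beta> = e0" if "\<beta> \<in> subindices e0" for \<beta>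
  proof -
    have le: "\<beta> k \<le> e0 k" for k using that by (simp add: subindices_def)
    then have "\<beta> k = 0" if "k \<noteq> 0" for k
      using le[of k] that by (simp add: e0_def)
    moreover have "\<beta> 0 \<le> 1" using le[of 0] by (simp add: e0_def)
    ultimately show ?thesis by (cases "\<beta> 0") (auto simp: e0_def fun_eq_iff, metis neq0_conv)
  qed
  then have subind: "subindices e0 = {\<lambda>_. 0, e0}"
    by (auto simp: subindices_def e0_def simp del: fun_upd_apply)
  have "(\<lambda>_. 0) \<noteq> e0" by (auto simp: e0_def fun_eq_iff)
  moreover have "fact (e0 k) = (1::real)" for k
    by (simp add: e0_def)
  then have "mfact N (\<lambda>_. 0) = 1" and "mfact N e0 = 1"
    by (simp_all add: mfact_def)
  moreover have "index_diff e0 (\<lambda>_. 0) = e0" and "index_diff e0 e0 = (\<lambda>_. 0)"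
    by (simp_all add: index_diff_def)
  moreover have "oddwt N e0 = (\<Sum>k<N. if k = 0 then 1 else 0)"
    unfolding oddwt_def by (rule sum.cong) (auto simp: e0_def)
  then have "oddwt N e0 = 1" and "oddwt N (\<lambda>_. 0) = 0"
    using assms by (simp_all add: oddwt_def)
  moreover have "Dpow D N e0 f = D 0 f" for f
    using Dpow_incr[of 0 N "\<lambda>_. 0" f] assms by (simp add: e0_def)
  ultimately show ?thesis
    unfolding e0_def[symmetric] bilinear_coeff_def subind
    by (simp add: multinomial_weight_def shifted_pairing_def add.commute)
qed

lemma shifted_residue_sum_eq_0:
  assumes "bilinear_identity D w wt"
  shows "(\<Sum>j\<le>q. miwa_exp_coeff j *\<^sub>R shifted_residue_pairing wt p (\<lambda>n. P (q - j) (w n)) j) = 0"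
  using bilinear_coeff_shifted_eq_0[OF assms, of p "p + q + 1" q "\<lambda>_. 0"]
  by (simp add: bilinear_coeff_zero_index)

lemma shifted_residue_sum_D0_eq_0:
  assumes "bilinear_identity D w wt"
  shows "(\<Sum>j\<le>q. miwa_exp_coeff j *\<^sub>R shifted_residue_pairing wt p (\<lambda>n. P (q - j) (w n)) (1 + j))
     + (\<Sum>j\<le>q. miwa_exp_coeff j *\<^sub>R shifted_residue_pairing wt p (\<lambda>n. P (q - j) (D 0 (w n))) j) = 0"
  using bilinear_coeff_shifted_eq_0[OF assms, of p "p + q + 1" q "(\<lambda>_. 0)(0 := 1)"]
    bilinear_coeff_unit_index[of "p + q + 1"] by simp

end

section \<open>Central elements and formal Laurent series\<close>

definition central :: "'a::ring_1 \<Rightarrow> bool" where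
  "central c \<longleftrightarrow> (\<forall>x. c * x = x * c)"

text \<open>Both orientations are stated so that they are permutative rules: \<open>simp\<close> then uses them for
  ordered rewriting, which sorts central factors past all others without looping. For the result to
  be a normal form, the central quantities of a goal must precede the others in the term order;
  this is why, in the computations below, central quantities are constants or variables named
  \<open>h\<close>--\<open>t\<close>, and the noncentral ones are variables named \<open>x\<dots>\<close> and \<open>y\<dots>\<close>.\<close>

lemma central_commute:
  assumes "central c"
  shows "c * x = x * c" and "x * c = c * x" and "c * (x * y) = x * (c * y)" and "x * (c * y) = c * (x * y)"
  using assms unfolding central_def by (metis mult.assoc)+

lemma central_1 [simp]: "central 1"
  by (simp add: central_def)

lemma central_mult [simp]: "central a \<Longrightarrow> central b \<Longrightarrow> central (a * b)"
  unfolding central_def by (metis mult.assoc)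

lemma central_add [simp]: "central a \<Longrightarrow> central b \<Longrightarrow> central (a + b)"
  by (simp add: central_def distrib_left distrib_right)

lemma central_diff [simp]: "central a \<Longrightarrow> central b \<Longrightarrow> central (a - b)"
  by (simp add: central_def left_diff_distrib right_diff_distrib)

lemma central_power [simp]: "central a \<Longrightarrow> central (a ^ n)"
  by (induction n) simp_all

lemma central_fls_X [simp]: "central (fls_X :: 'a::ring_1 fls)"
  unfolding central_def by (simp add: fls_X_times_comm)

lemma central_fls_X_inv [simp]: "central (fls_X_inv :: 'a::ring_1 fls)"
  unfolding central_def by (simp add: fls_X_inv_times_comm)

lemma central_fls_const: "central c \<Longrightarrow> central (fls_const c)"
  unfolding central_def by (intro allI fls_eqI) (simp add: central_def)

lemma central_of_real [simp]: "central (of_real c :: 'a::real_algebra_1)"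
  by (simp add: central_def of_real_def)

lemma central_fls_const_of_real [simp]: "central (fls_const (of_real c :: 'a::real_algebra_1))"
  by (simp add: central_fls_const)

lemma fls_X_inv_X [simp]: "fls_X_inv * (fls_X :: 'a::ring_1 fls) = 1"
  by (intro fls_eqI) (simp add: fls_X_inv_times_conv_shift)

lemma fls_X_X_inv [simp]: "fls_X * (fls_X_inv :: 'a::ring_1 fls) = 1"
  by (intro fls_eqI) (simp add: fls_X_times_conv_shift)

lemma fls_const_add: "fls_const (a + b) = fls_const a + fls_const (b :: 'a::ring_1)"
  by (intro fls_eqI) simp

lemma fls_const_scaleR: "fls_const (c *\<^sub>R x) = fls_const (of_real c) * fls_const (x :: 'a::real_algebra_1)"
  by (simp add: scaleR_conv_of_real)

lemma diff_half_scaleR: "x - (1/2::real) *\<^sub>R x = (1/2) *\<^sub>R (x :: 'a::real_vector)"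
proof -
  have "x = (1/2::real) *\<^sub>R x + (1/2) *\<^sub>R x" by (simp flip: scaleR_add_left)
  then show ?thesis by (metis add_diff_cancel)
qed

lemma fls_const_half_add_half:
  "fls_const (of_real (1/2)) + fls_const (of_real (1/2)) = (1 :: 'a::real_algebra_1 fls)"
  by (simp flip: fls_const_add of_real_add)

section \<open>Series in one spectral parameter\<close>

unbundle fps_syntax

lemma ser1_nth: "ser1 f $$ n = (if n < 0 then 0 else f (nat n))"
  by (simp add: ser1_def)

lemma ser1_eqI: "(\<And>p. f p = g p) \<Longrightarrow> ser1 f = ser1 g"
  by (metis ext)

lemma ser1_zero: "ser1 (\<lambda>p. 0) = (0 :: 'a::ring_1 fls)"
  by (intro fls_eqI) (simp add: ser1_nth)

lemma ser1_add: "ser1 (\<lambda>p. f p + g p) = ser1 f + ser1 (g :: nat \<Rightarrow> 'a::ring_1)"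
  by (intro fls_eqI) (simp add: ser1_nth)

lemma ser1_diff: "ser1 (\<lambda>p. f p - g p) = ser1 f - ser1 (g :: nat \<Rightarrow> 'a::ring_1)"
  by (intro fls_eqI) (simp add: ser1_nth)

lemma ser1_uminus: "ser1 (\<lambda>p. - f p) = - ser1 (f :: nat \<Rightarrow> 'a::ring_1)"
  by (intro fls_eqI) (simp add: ser1_nth)

lemma ser1_sum: "ser1 (\<lambda>p. \<Sum>i\<in>A. f i p) = (\<Sum>i\<in>A. ser1 (f i) :: 'a::ring_1 fls)"
  by (induction A rule: infinite_finite_induct) (simp_all add: ser1_add ser1_zero)

lemma ser1_const: "ser1 (\<lambda>p. if p = 0 then x else 0) = fls_const (x :: 'a::ring_1)"
  by (intro fls_eqI) (auto simp: ser1_nth)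

lemma ser1_one: "ser1 (\<lambda>p. if p = 0 then 1 else 0) = (1 :: 'a::ring_1 fls)"
  using ser1_const[of 1] by simp

lemma ser1_const_mult: "ser1 (\<lambda>p. x * f p) = fls_const x * ser1 (f :: nat \<Rightarrow> 'a::ring_1)"
  by (intro fls_eqI) (simp add: ser1_nth)

lemma ser1_mult_const: "ser1 (\<lambda>p. f p * x) = ser1 f * fls_const (x :: 'a::ring_1)"
  by (intro fls_eqI) (simp add: ser1_nth)

lemma ser1_scaleR: "ser1 (\<lambda>p. c *\<^sub>R f p) = fls_const (of_real c) * ser1 (f :: nat \<Rightarrow> 'a::real_algebra_1)"
  by (intro fls_eqI) (simp add: ser1_nth scaleR_conv_of_real)

lemma ser1_mult: "ser1 f * ser1 g = ser1 (\<lambda>p. \<Sum>i\<le>p. f i * g (p - i) :: 'a::ring_1)"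
proof -
  have "Abs_fps f * Abs_fps g = Abs_fps (\<lambda>p. \<Sum>i\<le>p. f i * g (p - i))"
    by (rule fps_ext) (simp add: fps_mult_nth atLeast0AtMost)
  then show ?thesis unfolding ser1_def by (simp add: fls_times_fps_to_fls[symmetric])
qed

lemma fls_X_times_ser1: "fls_X * ser1 f = ser1 (\<lambda>p. if p = 0 then 0 else f (p - 1) :: 'a::ring_1)"
proof -
  have "fps_X * Abs_fps f = Abs_fps (\<lambda>p. if p = 0 then 0 else f (p - 1))"
    by (rule fps_ext) simp
  then have "fps_to_fls (fps_X * Abs_fps f) = fps_to_fls (Abs_fps (\<lambda>p. if p = 0 then 0 else f (p - 1)))"
    by simp
  then show ?thesis unfolding ser1_def fls_times_fps_to_fls by simp
qed

lemma sum_triangle_reindex: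
  "(\<Sum>i\<le>(p::nat). \<Sum>n\<le>i. f n (i - n) (p - i)) = (\<Sum>n\<le>p. \<Sum>i\<le>n. f i (p - n) (n - i))"
proof -
  have swap: "(\<Sum>i\<le>p. \<Sum>n\<le>i. g n i) = (\<Sum>n\<le>p. \<Sum>i\<in>{n..p}. g n i)" for g :: "nat \<Rightarrow> nat \<Rightarrow> 'a"
  proof -
    have "(\<Sum>i\<le>p. \<Sum>n\<le>i. g n i) = (\<Sum>i\<le>p. \<Sum>n\<in>{n. n \<in> {..p} \<and> n \<le> i}. g n i)"
      by (rule sum.cong[OF refl], rule sum.cong) auto
    also have "\<dots> = (\<Sum>n\<le>p. \<Sum>i\<in>{i. i \<in> {..p} \<and> n \<le> i}. g n i)"
      by (rule sum.swap_restrict) auto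
    also have "\<dots> = (\<Sum>n\<le>p. \<Sum>i\<in>{n..p}. g n i)"
      by (rule sum.cong[OF refl], rule sum.cong) auto
    finally show ?thesis .
  qed
  have "(\<Sum>i\<le>p. \<Sum>n\<le>i. f n (i - n) (p - i)) = (\<Sum>x\<le>p. \<Sum>i\<in>{x..p}. f x (i - x) (p - i))"
    by (rule swap)
  also have "\<dots> = (\<Sum>x\<le>p. \<Sum>n\<in>{x..p}. f x (p - n) (n - x))"
  proof (rule sum.cong[OF refl])
    fix x assume x: "x \<in> {..p}"
    show "(\<Sum>i\<in>{x..p}. f x (i - x) (p - i)) = (\<Sum>n\<in>{x..p}. f x (p - n) (n - x))"
      by (rule sum.reindex_bij_witness[where i="\<lambda>n. p + x - n" and j="\<lambda>i. p + x - i"]) (use x in auto)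
  qed
  also have "\<dots> = (\<Sum>n\<le>p. \<Sum>i\<le>n. f i (p - n) (n - i))"
    by (rule swap[symmetric])
  finally show ?thesis .
qed

text \<open>\<open>graded_ser1 T = \<Sum>\<^sub>n \<lambda>\<^sup>n T\<^sub>n(\<lambda>)\<close>, where \<open>T\<^sub>n(\<lambda>) = ser1 (T n)\<close>.\<close>

definition graded_ser1 :: "(nat \<Rightarrow> nat \<Rightarrow> 'a::ring_1) \<Rightarrow> 'a fls" where
  "graded_ser1 T = ser1 (\<lambda>p. \<Sum>n\<le>p. T n (p - n))"

lemma graded_ser1_split: "graded_ser1 T = ser1 (T 0) + fls_X * graded_ser1 (\<lambda>n. T (Suc n))"
  unfolding graded_ser1_def fls_X_times_ser1 ser1_add[symmetric]
proof (rule ser1_eqI)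
  fix p show "(\<Sum>n\<le>p. T n (p - n)) = T 0 p + (if p = 0 then 0 else \<Sum>n\<le>p - 1. T (Suc n) (p - 1 - n))"
    by (cases p) (simp_all only: sum.atMost_Suc_shift diff_zero, simp_all)
qed

lemma graded_ser1_add: "graded_ser1 (\<lambda>n p. T n p + U n p) = graded_ser1 T + graded_ser1 U"
  unfolding graded_ser1_def ser1_add[symmetric] by (simp add: sum.distrib)

text \<open>The residue identities below are of the form \<open>res\<^sub>z [T(z) e\<^bsup>\<xi>~(2[\<lambda>], z)\<^esup>] = 0\<close>; expanding
  \<open>e\<^bsup>\<xi>~(2[\<lambda>], z)\<^esup> = 2/(1 - \<lambda>z) - 1\<close> expresses the tail of \<open>T(\<lambda>\<^sup>-\<^sup>1)\<close> by its first coefficient.\<close>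

lemma graded_ser1_tail:
  fixes T :: "nat \<Rightarrow> nat \<Rightarrow> 'a::real_algebra_1"
  assumes "\<And>p. (\<Sum>j\<le>p. miwa_exp_coeff j *\<^sub>R T (Suc j) (p - j)) = 0"
  shows "graded_ser1 (\<lambda>n. T (Suc n)) = fls_const (of_real (1/2)) * ser1 (T 1)"
  unfolding graded_ser1_def ser1_scaleR[symmetric]
proof (rule ser1_eqI)
  fix p
  have "2 *\<^sub>R (\<Sum>j\<le>p. T (Suc j) (p - j)) = T 1 p"
    using assms[of p] miwa_exp_coeff_sum[where n=p and f="\<lambda>j. T (Suc j) (p - j)"] by simp
  then show "(\<Sum>n\<le>p. T (Suc n) (p - n)) = (1/2) *\<^sub>R T 1 p"
    by (metis scaleR_2 scaleR_half_double)
qed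

context commuting_derivations
begin

text \<open>\<open>shifted_product_coeff w~ g n p\<close> is the coefficient of \<open>z\<^sup>-\<^sup>n \<lambda>\<^sup>p\<close> in \<open>g(t\<^sub>o + 2[\<lambda>], z) w~(t\<^sub>o, z)\<close>.\<close>

definition shifted_product_coeff :: "(nat \<Rightarrow> 'r) \<Rightarrow> (nat \<Rightarrow> 'r) \<Rightarrow> nat \<Rightarrow> nat \<Rightarrow> 'r" where
  "shifted_product_coeff wt g n p = (\<Sum>i\<le>n. P p (g i) * wt (n - i))"

lemma shser1_times_ser1: "shser1 D g * ser1 wt = graded_ser1 (shifted_product_coeff wt g)"
proof -
  have shser1_eq: "shser1 D g = ser1 (\<lambda>N. \<Sum>n\<le>N. P (N - n) (g n))"
    by (simp add: shser1_def ser1_def)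
  show ?thesis
    unfolding shser1_eq ser1_mult graded_ser1_def shifted_product_coeff_def
    using sum_triangle_reindex[of "\<lambda>x y z. P y (g x) * wt z"]
    by (auto simp: sum_distrib_right intro: ser1_eqI)
qed

lemma shifted_residue_pairing_eq:
  "shifted_residue_pairing wt p g m = (\<Sum>j\<le>p. miwa_exp_coeff j *\<^sub>R shifted_product_coeff wt g (Suc (m + j)) (p - j))"
  by (simp add: shifted_residue_pairing_def residue_pairing_def shifted_product_coeff_def)

lemma shifted_product_coeff_identity:
  assumes "bilinear_identity D w wt"
  shows "(\<Sum>j\<le>p. miwa_exp_coeff j *\<^sub>R shifted_product_coeff wt w (Suc j) (p - j)) = 0"
  using shifted_residue_sum_eq_0[OF assms, of p 0] by (simp add: shifted_residue_pairing_eq miwa_exp_coeff_def)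

text \<open>\<open>derivative_product_coeff w~ w n p\<close> is the coefficient of \<open>z\<^sup>-\<^sup>n \<lambda>\<^sup>p\<close> in
  \<open>(w' + z w)(t\<^sub>o + 2[\<lambda>], z) w~(t\<^sub>o, z)\<close>.\<close>

definition derivative_product_coeff :: "(nat \<Rightarrow> 'r) \<Rightarrow> (nat \<Rightarrow> 'r) \<Rightarrow> nat \<Rightarrow> nat \<Rightarrow> 'r" where
  "derivative_product_coeff wt w n p
     = shifted_product_coeff wt w (Suc n) p + shifted_product_coeff wt (\<lambda>i. D 0 (w i)) n p"

lemma derivative_product_coeff_identity:
  assumes "bilinear_identity D w wt"
  shows "(\<Sum>j\<le>p. miwa_exp_coeff j *\<^sub>R derivative_product_coeff wt w (Suc j) (p - j)) = 0"
  using shifted_residue_sum_D0_eq_0[OF assms, of p 0]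
  by (simp add: derivative_product_coeff_def shifted_residue_pairing_eq miwa_exp_coeff_def
      scaleR_add_right sum.distrib)

lemma miwa1_eq_ser1: "miwa1 D f = ser1 (\<lambda>p. P p f)"
  by (simp add: miwa1_def ser1_def)

lemma miwa1_add: "miwa1 D (a + b) = miwa1 D a + miwa1 D b"
  by (simp add: miwa1_eq_ser1 P_add ser1_add)

lemma miwa1_uminus: "miwa1 D (- a) = - miwa1 D a"
  by (simp add: miwa1_eq_ser1 P_uminus ser1_uminus)

lemma miwa1_scaleR: "miwa1 D (c *\<^sub>R a) = fls_const (of_real c) * miwa1 D a"
  by (simp add: miwa1_eq_ser1 P_scaleR ser1_scaleR)

lemma miwa1_mult: "miwa1 D (a * b) = miwa1 D a * miwa1 D b"
  by (simp add: miwa1_eq_ser1 P_mult ser1_mult)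

end

locale bilinear_setting = commuting_derivations D for D :: "nat \<Rightarrow> 'r::real_algebra_1 \<Rightarrow> 'r" +
  fixes w wt :: "nat \<Rightarrow> 'r"
    and \<phi> \<theta>t \<theta>c :: 'r
  assumes w0: "w 0 = 1" and wt0: "wt 0 = 1"
    and bil: "bilinear_identity D w wt"
    and phi_def: "\<phi> = - w 1"
    and thetat_def: "w 2 = - \<theta>t + (1/2) *\<^sub>R (D 0 \<phi> + \<phi> * \<phi>)"
    and thetac_def: "\<theta>c = \<theta>t + (1/2) *\<^sub>R D 0 \<phi>"
begin

lemma shifted_product_coeff_0: "shifted_product_coeff wt w 0 p = (if p = 0 then 1 else 0)"
  by (simp add: shifted_product_coeff_def P_one w0 wt0)

lemma shifted_product_coeff_1: "shifted_product_coeff wt w 1 p = (if p = 0 then wt 1 else 0) + P p (w 1)"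
  by (simp add: shifted_product_coeff_def P_one w0 wt0)

lemma shifted_product_coeff_2:
  "shifted_product_coeff wt w 2 p = (if p = 0 then wt 2 else 0) + P p (w 1) * wt 1 + P p (w 2)"
  by (simp add: shifted_product_coeff_def P_one w0 wt0 numeral_2_eq_2 add.assoc)

lemma shifted_product_coeff_D0_0: "shifted_product_coeff wt (\<lambda>i. D 0 (w i)) 0 p = 0"
  by (simp add: shifted_product_coeff_def w0)

lemma shifted_product_coeff_D0_1: "shifted_product_coeff wt (\<lambda>i. D 0 (w i)) 1 p = P p (D 0 (w 1))"
  by (simp add: shifted_product_coeff_def w0 wt0)

lemma w_1: "w 1 = - \<phi>"
  by (simp add: phi_def)

lemma wt_1: "wt 1 = \<phi>"
proof -
  have "shifted_product_coeff wt w 1 0 = 0"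
    using shifted_product_coeff_identity[OF bil, of 0] by (simp add: miwa_exp_coeff_def)
  then show ?thesis using shifted_product_coeff_1[of 0] phi_def by (simp add: add_eq_0_iff)
qed

lemma identity_i: "wt 2 = \<theta>t + (1/2) *\<^sub>R (D 0 \<phi> + \<phi> * \<phi>)"
proof -
  have "shifted_product_coeff wt w 2 0 + shifted_product_coeff wt (\<lambda>i. D 0 (w i)) 1 0 = 0"
    using derivative_product_coeff_identity[OF bil, of 0]
    by (simp add: derivative_product_coeff_def miwa_exp_coeff_def numeral_2_eq_2)
  then have sum0: "wt 2 + w 1 * wt 1 + w 2 + D 0 (w 1) = 0"
    using shifted_product_coeff_2[of 0] shifted_product_coeff_D0_1[of 0] by (simp add: add.assoc)
  have "wt 2 = (wt 2 + w 1 * wt 1 + w 2 + D 0 (w 1)) - w 1 * wt 1 - w 2 - D 0 (w 1)"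
    by (simp add: algebra_simps)
  also have "\<dots> = - (w 1 * wt 1) - w 2 - D 0 (w 1)"
    unfolding sum0 by simp
  also have "\<dots> = \<phi> * \<phi> - w 2 + D 0 \<phi>"
    using wt_1 phi_def by (simp add: D_uminus)
  also have "\<dots> = \<theta>t + ((D 0 \<phi> + \<phi> * \<phi>) - (1/2) *\<^sub>R (D 0 \<phi> + \<phi> * \<phi>))"
    unfolding thetat_def by (simp add: algebra_simps)
  finally show ?thesis
    by (simp add: diff_half_scaleR)
qed

lemma graded_ser1_tail_w:
  "graded_ser1 (\<lambda>n. shifted_product_coeff wt w (Suc n))
    = fls_const (of_real (1/2)) * (fls_const \<phi> - miwa1 D \<phi>)"
proof -
  have "ser1 (shifted_product_coeff wt w 1) = fls_const \<phi> - miwa1 D \<phi>"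
    unfolding shifted_product_coeff_1 ser1_add ser1_const wt_1 miwa1_eq_ser1[symmetric] phi_def miwa1_uminus
    by simp
  then show ?thesis
    using graded_ser1_tail[OF shifted_product_coeff_identity[OF bil]] by simp
qed

lemma identity_ii:
  assumes F1_def: "F1 = 1 - fls_const (of_real (1/2)) * fls_X * (miwa1 D \<phi> - fls_const \<phi>)"
  shows "shser1 D w * ser1 wt = F1"
proof -
  have "shser1 D w * ser1 wt = 1 + fls_X * (fls_const (of_real (1/2)) * (fls_const \<phi> - miwa1 D \<phi>))"
    unfolding shser1_times_ser1 graded_ser1_split[of "shifted_product_coeff wt w"] graded_ser1_tail_w
      shifted_product_coeff_0 ser1_one ..
  then show ?thesis
    unfolding F1_def by (simp add: algebra_simps central_commute(4)[OF central_fls_X])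
qed

lemma ser1_derivative_product_coeff_0:
  "ser1 (derivative_product_coeff wt w 0) = fls_const \<phi> - miwa1 D \<phi>"
proof -
  have "derivative_product_coeff wt w 0 = (\<lambda>p. (if p = 0 then \<phi> else 0) - P p \<phi>)"
    unfolding derivative_product_coeff_def
    by (rule ext) (simp add: shifted_product_coeff_1[unfolded One_nat_def] shifted_product_coeff_D0_0
        wt_1[unfolded One_nat_def] w_1[unfolded One_nat_def] P_uminus)
  then show ?thesis
    by (simp add: miwa1_eq_ser1 ser1_diff ser1_const)
qed

lemma ser1_derivative_product_coeff_1:
  "ser1 (derivative_product_coeff wt w 1)
    = fls_const (wt 2) - miwa1 D \<phi> * fls_const \<phi> + miwa1 D (w 2) - miwa1 D (D 0 \<phi>)"
proof -
  have "derivative_product_coeff wt w 1 = (\<lambda>p. (if p = 0 then wt 2 else 0) - P p \<phi> * \<phi> + P p (w 2) - P p (D 0 \<phi>))"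
    unfolding derivative_product_coeff_def
    by (rule ext) (simp add: shifted_product_coeff_2[unfolded numeral_2_eq_2]
        shifted_product_coeff_D0_1[unfolded One_nat_def] wt_1[unfolded One_nat_def]
        w_1[unfolded One_nat_def] P_uminus D_uminus numeral_2_eq_2)
  then show ?thesis
    by (simp add: miwa1_eq_ser1 ser1_add ser1_diff ser1_const ser1_mult_const)
qed

lemma derivative_series_eq:
  "(shser1 D (\<lambda>n. D 0 (w n)) + fls_X_inv * shser1 D w) * ser1 wt
    = fls_X_inv + ser1 (derivative_product_coeff wt w 0)
      + fls_X * (fls_const (of_real (1/2)) * ser1 (derivative_product_coeff wt w 1))"
proof -
  have "fls_X_inv * (fls_X * z) = z" for z :: "'r fls"
    by (simp flip: mult.assoc)
  then have "(shser1 D (\<lambda>n. D 0 (w n)) + fls_X_inv * shser1 D w) * ser1 wt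
      = fls_X_inv + graded_ser1 (derivative_product_coeff wt w)"
    unfolding distrib_right mult.assoc shser1_times_ser1 graded_ser1_split[of "shifted_product_coeff wt w"]
      shifted_product_coeff_0 ser1_one derivative_product_coeff_def graded_ser1_add
    by (simp add: algebra_simps)
  then show ?thesis
    unfolding graded_ser1_split[of "derivative_product_coeff wt w"]
      graded_ser1_tail[OF derivative_product_coeff_identity[OF bil]]
    by (simp add: add.assoc)
qed

lemma identity_iii:
  assumes F1_def: "F1 = 1 - fls_const (of_real (1/2)) * fls_X * (miwa1 D \<phi> - fls_const \<phi>)"
  shows "(shser1 D (\<lambda>n. D 0 (w n)) + fls_X_inv * shser1 D w) * ser1 wt
           = fls_X_inv * F1\<^sup>2
             - fls_const (of_real (1/2)) * fls_X * (miwa1 D \<theta>c - fls_const \<theta>c)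
             + fls_const (of_real (1/4)) * fls_X * commut (fls_const \<phi>) (miwa1 D \<phi>)"
proof -
  define h :: "'r fls" where "h = fls_const (of_real (1/2))"
  define x\<phi> y\<phi> where "x\<phi> = fls_const \<phi>" and "y\<phi> = miwa1 D \<phi>"
  define x\<phi>' y\<phi>' where "x\<phi>' = fls_const (D 0 \<phi>)" and "y\<phi>' = miwa1 D (D 0 \<phi>)"
  define x\<theta> y\<theta> where "x\<theta> = fls_const \<theta>t" and "y\<theta> = miwa1 D \<theta>t"
  have h: "central h" "h + h = 1" "fls_const (of_real (1/4)) = h * h"
    unfolding h_def by (simp_all add: fls_const_half_add_half flip: of_real_mult)
  have "fls_const (wt 2) = x\<theta> + h * x\<phi>' + h * (x\<phi> * x\<phi>)"
    unfolding identity_i fls_const_add fls_const_scaleR x\<theta>_def x\<phi>'_def x\<phi>_def h_def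
    by (simp add: distrib_left)
  moreover have "miwa1 D (w 2) = - y\<theta> + h * y\<phi>' + h * (y\<phi> * y\<phi>)"
    unfolding thetat_def miwa1_add miwa1_uminus miwa1_scaleR miwa1_mult y\<theta>_def y\<phi>'_def y\<phi>_def h_def
    by (simp add: distrib_left)
  ultimately have lhs: "(shser1 D (\<lambda>n. D 0 (w n)) + fls_X_inv * shser1 D w) * ser1 wt
      = fls_X_inv + (x\<phi> - y\<phi>) + fls_X * (h * (x\<theta> + h * x\<phi>' + h * (x\<phi> * x\<phi>) - y\<phi> * x\<phi>
        + (- y\<theta> + h * y\<phi>' + h * (y\<phi> * y\<phi>)) - y\<phi>'))"
    unfolding derivative_series_eq ser1_derivative_product_coeff_0 ser1_derivative_product_coeff_1
    by (simp add: h_def x\<phi>_def y\<phi>_def y\<phi>'_def)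
  have rhs: "fls_X_inv * F1\<^sup>2 - fls_const (of_real (1/2)) * fls_X * (miwa1 D \<theta>c - fls_const \<theta>c)
       + fls_const (of_real (1/4)) * fls_X * commut (fls_const \<phi>) (miwa1 D \<phi>)
     = fls_X_inv * ((1 - h * fls_X * (y\<phi> - x\<phi>)) * (1 - h * fls_X * (y\<phi> - x\<phi>)))
       - h * fls_X * (y\<theta> + h * y\<phi>' - (x\<theta> + h * x\<phi>')) + h * h * fls_X * (x\<phi> * y\<phi> - y\<phi> * x\<phi>)"
    unfolding F1_def power2_eq_square thetac_def miwa1_add miwa1_scaleR fls_const_add fls_const_scaleR
      commut_def h(3) h_def[symmetric] x\<phi>_def[symmetric] y\<phi>_def[symmetric] x\<phi>'_def[symmetric]
      y\<phi>'_def[symmetric] x\<theta>_def[symmetric] y\<theta>_def[symmetric] ..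
  have X_X_inv: "fls_X * (fls_X_inv * z) = z" for z :: "'r fls"
    by (simp flip: mult.assoc)
  have "fls_X_inv + (x\<phi> - y\<phi>) + fls_X * (h * (x\<theta> + h * x\<phi>' + h * (x\<phi> * x\<phi>) - y\<phi> * x\<phi>
        + (- y\<theta> + h * y\<phi>' + h * (y\<phi> * y\<phi>)) - y\<phi>'))
      - (fls_X_inv * ((1 - h * fls_X * (y\<phi> - x\<phi>)) * (1 - h * fls_X * (y\<phi> - x\<phi>)))
       - h * fls_X * (y\<theta> + h * y\<phi>' - (x\<theta> + h * x\<phi>')) + h * h * fls_X * (x\<phi> * y\<phi> - y\<phi> * x\<phi>))
    = (h + h - 1) * (y\<phi> - x\<phi> + h * fls_X * (y\<phi> * x\<phi> + y\<phi>'))"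
    using h(1) by (simp add: algebra_simps central_commute X_X_inv)
  then show ?thesis
    unfolding lhs rhs h(2) by simp
qed

end

section \<open>Series in two spectral parameters\<close>

lemma bivar_eq_ser1: "bivar c = ser1 (\<lambda>b. ser1 (\<lambda>a. c a b))"
  by (simp add: bivar_def ser1_def)

lemma bivar_eqI: "(\<And>a b. c a b = d a b) \<Longrightarrow> bivar c = bivar d"
  by (metis ext)

lemma bivar_zero: "bivar (\<lambda>a b. 0) = (0 :: 'a::ring_1 fls fls)"
  unfolding bivar_eq_ser1 by (simp add: ser1_zero)

lemma bivar_add: "bivar (\<lambda>a b. c a b + d a b) = bivar c + bivar (d :: nat \<Rightarrow> nat \<Rightarrow> 'a::ring_1)"
  unfolding bivar_eq_ser1 by (simp add: ser1_add)

lemma bivar_diff: "bivar (\<lambda>a b. c a b - d a b) = bivar c - bivar (d :: nat \<Rightarrow> nat \<Rightarrow> 'a::ring_1)"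
  unfolding bivar_eq_ser1 by (simp add: ser1_diff)

lemma bivar_uminus: "bivar (\<lambda>a b. - c a b) = - bivar (c :: nat \<Rightarrow> nat \<Rightarrow> 'a::ring_1)"
  unfolding bivar_eq_ser1 by (simp add: ser1_uminus)

lemma bivar_mult:
  "bivar c * bivar d = bivar (\<lambda>a b. \<Sum>i\<le>b. \<Sum>k\<le>a. c k i * d (a - k) (b - i) :: 'a::ring_1)"
  unfolding bivar_eq_ser1 ser1_mult by (intro ser1_eqI) (simp add: ser1_mult ser1_sum)

lemma C2_mult_bivar: "C2 x * bivar c = bivar (\<lambda>a b. x * c a b :: 'a::ring_1)"
  unfolding bivar_eq_ser1 C2_def ser1_const_mult[symmetric] by (simp add: ser1_const_mult)

lemma bivar_mult_C2: "bivar c * C2 x = bivar (\<lambda>a b. c a b * x :: 'a::ring_1)"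
  unfolding bivar_eq_ser1 C2_def ser1_mult_const[symmetric] by (simp add: ser1_mult_const)

lemma bivar_const: "bivar (\<lambda>a b. if a = 0 \<and> b = 0 then x else 0) = C2 (x :: 'a::ring_1)"
proof -
  have inner: "(\<lambda>b. ser1 (\<lambda>a. if a = 0 \<and> b = 0 then x else 0)) = (\<lambda>b. if b = 0 then fls_const x else 0)"
    by (rule ext) (simp add: ser1_const ser1_zero)
  show ?thesis unfolding bivar_eq_ser1 C2_def inner by (rule ser1_const)
qed

lemma Lam_times_bivar: "Lam * bivar c = bivar (\<lambda>a b. if a = 0 then 0 else c (a - 1) b :: 'a::ring_1)"
  unfolding bivar_eq_ser1 Lam_def ser1_const_mult[symmetric] by (simp add: fls_X_times_ser1)

lemma Mu_times_bivar: "Mu * bivar c = bivar (\<lambda>a b. if b = 0 then 0 else c a (b - 1) :: 'a::ring_1)"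
proof -
  have "(\<lambda>b. if b = 0 then 0 else ser1 (\<lambda>a. c a (b - 1)))
      = (\<lambda>b. ser1 (\<lambda>a. if b = 0 then 0 else c a (b - 1)))"
    by (rule ext) (simp add: ser1_zero)
  then show ?thesis unfolding bivar_eq_ser1 Mu_def fls_X_times_ser1 by simp
qed

lemma central_Lam [simp]: "central (Lam :: 'a::ring_1 fls fls)"
  unfolding Lam_def by (rule central_fls_const) simp

lemma central_Mu [simp]: "central (Mu :: 'a::ring_1 fls fls)"
  unfolding Mu_def by simp

lemma central_Lam_inv [simp]: "central (Lam_inv :: 'a::ring_1 fls fls)"
  unfolding Lam_inv_def by (rule central_fls_const) simp

lemma central_Mu_inv [simp]: "central (Mu_inv :: 'a::ring_1 fls fls)"
  unfolding Mu_inv_def by simp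

lemma central_C2_of_real [simp]: "central (C2 (of_real c) :: 'a::real_algebra_1 fls fls)"
  unfolding C2_def by (rule central_fls_const) simp

lemma Lam_Lam_inv [simp]: "Lam * Lam_inv = (1 :: 'a::ring_1 fls fls)"
  unfolding Lam_def Lam_inv_def by simp

lemma Mu_Mu_inv [simp]: "Mu * Mu_inv = (1 :: 'a::ring_1 fls fls)"
  unfolding Mu_def Mu_inv_def by simp

lemma C2_add: "C2 (a + b) = C2 a + C2 (b :: 'a::ring_1)"
  unfolding C2_def by (simp add: fls_const_add)

lemma C2_mult: "C2 (a * b) = C2 a * C2 (b :: 'a::ring_1)"
  unfolding C2_def by simp

lemma C2_scaleR: "C2 (c *\<^sub>R x) = C2 (of_real c) * C2 (x :: 'a::real_algebra_1)"
  unfolding C2_def by (simp add: fls_const_scaleR)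

lemma C2_half_add_half: "C2 (of_real (1/2)) + C2 (of_real (1/2)) = (1 :: 'a::real_algebra_1 fls fls)"
proof -
  have "C2 (of_real (1/2)) + C2 (of_real (1/2)) = C2 (of_real (1/2 + 1/2) :: 'a)"
    by (simp only: of_real_add C2_add)
  then show ?thesis by (simp add: C2_def)
qed

lemma C2_half_squared: "C2 (of_real (1/2)) * C2 (of_real (1/2)) = (C2 (of_real (1/4)) :: 'a::real_algebra_1 fls fls)"
  unfolding C2_def by (simp flip: of_real_mult)

text \<open>\<open>1/(\<lambda> + \<mu>) = \<Sum>\<^sub>b (-1)\<^sup>b \<mu>\<^sup>b \<lambda>\<^sup>-\<^sup>b\<^sup>-\<^sup>1\<close>, expanded in the outer variable \<open>\<mu>\<close>.\<close>

definition inverse_Lam_Mu :: "'a::ring_1 fls fls" where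
  "inverse_Lam_Mu = ser1 (\<lambda>b. (- 1) ^ b * fls_X_inv ^ Suc b)"

lemma Lam_Mu_times_inverse: "(Lam + Mu) * inverse_Lam_Mu = (1 :: 'a::ring_1 fls fls)"
proof -
  have "fls_X * ((- 1) ^ b * fls_X_inv ^ Suc b) = (- 1) ^ b * (fls_X * fls_X_inv ^ Suc b :: 'a fls)" for b
    using central_commute(3)[OF central_fls_X] by simp
  then have "fls_X * ((- 1) ^ b * fls_X_inv ^ Suc b) = (- 1) ^ b * (fls_X_inv ^ b :: 'a fls)" for b
    by (simp add: mult.assoc[symmetric])
  then have "(Lam + Mu) * inverse_Lam_Mu = ser1 (\<lambda>b. if b = 0 then 1 else 0 :: 'a fls)"
    unfolding inverse_Lam_Mu_def distrib_right Lam_def Mu_def ser1_const_mult[symmetric]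
      fls_X_times_ser1 ser1_add[symmetric]
    by (intro ser1_eqI) (auto simp: gr0_conv_Suc)
  then show ?thesis by (simp add: ser1_one)
qed

lemma central_inverse_Lam_Mu [simp]: "central (inverse_Lam_Mu :: 'a::ring_1 fls fls)"
  unfolding central_def
proof
  fix x :: "'a fls fls"
  have "inverse_Lam_Mu * x = inverse_Lam_Mu * x * ((Lam + Mu) * inverse_Lam_Mu)"
    by (simp add: Lam_Mu_times_inverse)
  also have "\<dots> = inverse_Lam_Mu * (x * (Lam + Mu)) * inverse_Lam_Mu"
    by (simp add: mult.assoc)
  also have "\<dots> = inverse_Lam_Mu * ((Lam + Mu) * x) * inverse_Lam_Mu"
    using central_commute(1)[of "Lam + Mu" x] by simp
  also have "\<dots> = (inverse_Lam_Mu * (Lam + Mu)) * x * inverse_Lam_Mu"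
    by (simp add: mult.assoc)
  also have "inverse_Lam_Mu * (Lam + Mu) = (1 :: 'a fls fls)"
    by (metis Lam_Mu_times_inverse central_commute(1) central_add central_Lam central_Mu)
  finally show "inverse_Lam_Mu * x = x * inverse_Lam_Mu" by simp
qed

lemma inverse_Lam_Mu_times_Lam_Mu: "inverse_Lam_Mu * (Lam + Mu) = (1 :: 'a::ring_1 fls fls)"
  by (metis Lam_Mu_times_inverse central_commute(1) central_inverse_Lam_Mu)

lemma uinv_Lam_Mu: "uinv (Lam + Mu) = (inverse_Lam_Mu :: 'a::ring_1 fls fls)"
  unfolding uinv_def
proof (rule the_equality)
  show "(Lam + Mu) * inverse_Lam_Mu = 1 \<and> inverse_Lam_Mu * (Lam + Mu) = (1 :: 'a fls fls)"
    using Lam_Mu_times_inverse inverse_Lam_Mu_times_Lam_Mu by simp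
next
  fix y :: "'a fls fls" assume "(Lam + Mu) * y = 1 \<and> y * (Lam + Mu) = 1"
  then have "y * ((Lam + Mu) * inverse_Lam_Mu) = inverse_Lam_Mu"
    by (simp flip: mult.assoc)
  then show "y = inverse_Lam_Mu" by (simp add: Lam_Mu_times_inverse)
qed

text \<open>For \<open>T\<^sub>n(\<lambda>, \<mu>) = bivar (T n)\<close>: \<open>graded_mu T = \<Sum>\<^sub>n \<mu>\<^sup>n T\<^sub>n\<close>, \<open>graded_lam T = \<Sum>\<^sub>n \<lambda>\<^sup>n T\<^sub>n\<close> and
  \<open>graded_lam_mu T = \<Sum>\<^sub>i\<^sub>,\<^sub>j \<lambda>\<^sup>i \<mu>\<^sup>j T\<^sub>i\<^sub>+\<^sub>j\<^sub>+\<^sub>1\<close>.\<close>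

definition graded_mu :: "(nat \<Rightarrow> nat \<Rightarrow> nat \<Rightarrow> 'a::ring_1) \<Rightarrow> 'a fls fls" where
  "graded_mu T = bivar (\<lambda>a b. \<Sum>n\<le>b. T n a (b - n))"

definition graded_lam :: "(nat \<Rightarrow> nat \<Rightarrow> nat \<Rightarrow> 'a::ring_1) \<Rightarrow> 'a fls fls" where
  "graded_lam T = bivar (\<lambda>a b. \<Sum>n\<le>a. T n (a - n) b)"

definition graded_lam_mu :: "(nat \<Rightarrow> nat \<Rightarrow> nat \<Rightarrow> 'a::ring_1) \<Rightarrow> 'a fls fls" where
  "graded_lam_mu T = bivar (\<lambda>a b. \<Sum>i\<le>a. \<Sum>j\<le>b. T (i + j + 1) (a - i) (b - j))"

lemma graded_mu_add: "graded_mu (\<lambda>n a b. T n a b + U n a b) = graded_mu T + graded_mu U"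
  unfolding graded_mu_def bivar_add[symmetric] by (simp add: sum.distrib)

lemma graded_lam_add: "graded_lam (\<lambda>n a b. T n a b + U n a b) = graded_lam T + graded_lam U"
  unfolding graded_lam_def bivar_add[symmetric] by (simp add: sum.distrib)

lemma graded_mu_split: "graded_mu T = bivar (T 0) + Mu * graded_mu (\<lambda>n. T (Suc n))"
  unfolding graded_mu_def Mu_times_bivar bivar_add[symmetric]
proof (rule bivar_eqI)
  fix a b
  show "(\<Sum>n\<le>b. T n a (b - n)) = T 0 a b + (if b = 0 then 0 else \<Sum>n\<le>b - 1. T (Suc n) a (b - 1 - n))"
    by (cases b) (simp_all only: sum.atMost_Suc_shift diff_zero, simp_all)
qed

lemma graded_lam_split: "graded_lam T = bivar (T 0) + Lam * graded_lam (\<lambda>n. T (Suc n))"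
  unfolding graded_lam_def Lam_times_bivar bivar_add[symmetric]
proof (rule bivar_eqI)
  fix a b
  show "(\<Sum>n\<le>a. T n (a - n) b) = T 0 a b + (if a = 0 then 0 else \<Sum>n\<le>a - 1. T (Suc n) (a - 1 - n) b)"
    by (cases a) (simp_all only: sum.atMost_Suc_shift diff_zero, simp_all)
qed

lemma graded_lam_mu_relation:
  "(Lam - Mu) * graded_lam_mu T = Lam * graded_lam (\<lambda>n. T (Suc n)) - Mu * graded_mu (\<lambda>n. T (Suc n))"
  unfolding left_diff_distrib graded_lam_mu_def graded_lam_def graded_mu_def Lam_times_bivar Mu_times_bivar
    bivar_diff[symmetric]
proof (rule bivar_eqI)
  fix a b
  define W where "W a b = (\<Sum>i\<le>a. \<Sum>j\<le>b. T (i + j + 1) (a - i) (b - j))" for a b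
  define L where "L a b = (\<Sum>n\<le>a. T (Suc n) (a - n) b)" for a b
  define M where "M a b = (\<Sum>n\<le>b. T (Suc n) a (b - n))" for a b
  have W_Suc: "W a' (Suc b') - W (Suc a') b' = L a' (Suc b') - M (Suc a') b'" for a' b'
  proof -
    define R where "R = (\<Sum>i\<le>a'. \<Sum>j\<le>b'. T (i + j + 2) (a' - i) (b' - j))"
    have "W a' (Suc b') = (\<Sum>i\<le>a'. T (i + 1) (a' - i) (Suc b')
        + (\<Sum>j\<le>b'. T (i + Suc j + 1) (a' - i) (Suc b' - Suc j)))"
      unfolding W_def by (rule sum.cong[OF refl]) (simp only: sum.atMost_Suc_shift add_0_right diff_zero)
    also have "\<dots> = L a' (Suc b') + R"
      unfolding L_def R_def sum.distrib by (simp add: add.commute add.left_commute)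
    finally have "W a' (Suc b') = L a' (Suc b') + R" .
    moreover have "W (Suc a') b' = (\<Sum>j\<le>b'. T (j + 1) (Suc a') (b' - j))
        + (\<Sum>i\<le>a'. \<Sum>j\<le>b'. T (Suc i + j + 1) (Suc a' - Suc i) (b' - j))"
      unfolding W_def by (simp only: sum.atMost_Suc_shift add_0_left diff_zero)
    then have "W (Suc a') b' = M (Suc a') b' + R"
      unfolding M_def R_def by (simp add: add.commute add.left_commute)
    ultimately show ?thesis by simp
  qed
  show "(if a = 0 then 0 else W (a - 1) b) - (if b = 0 then 0 else W a (b - 1))
      = (if a = 0 then 0 else L (a - 1) b) - (if b = 0 then 0 else M a (b - 1))"
    unfolding W_def[symmetric] L_def[symmetric] M_def[symmetric]
  proof (cases a; cases b)
    fix a' b' assume "a = Suc a'" "b = Suc b'"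
    then show ?thesis using W_Suc[of a' b'] by simp
  qed (simp_all add: W_def L_def M_def)
qed

text \<open>The two-parameter residue identities
  \<open>res\<^sub>z [T(z) e\<^bsup>\<xi>~(2[\<lambda>], z)\<^esup> e\<^bsup>\<xi>~(2[\<mu>], z)\<^esup>] = 0\<close> determine \<open>graded_lam_mu T\<close>.\<close>

lemma graded_lam_mu_eq:
  fixes T :: "nat \<Rightarrow> nat \<Rightarrow> nat \<Rightarrow> 'a::real_algebra_1"
  assumes G: "\<And>p q. (\<Sum>j\<le>q. miwa_exp_coeff j *\<^sub>R (\<Sum>i\<le>p. miwa_exp_coeff i *\<^sub>R T (i + j + 1) (p - i) (q - j))) = 0"
  shows "graded_lam_mu T = C2 (of_real (1/2)) * graded_lam (\<lambda>n. T (Suc n))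
    + C2 (of_real (1/2)) * graded_mu (\<lambda>n. T (Suc n)) - C2 (of_real (1/4)) * bivar (T 1)"
  unfolding graded_lam_mu_def graded_lam_def graded_mu_def C2_mult_bivar bivar_add[symmetric] bivar_diff[symmetric]
proof (rule bivar_eqI)
  fix a b
  define X where "X i j = T (i + j + 1) (a - i) (b - j)" for i j
  define W where "W = (\<Sum>i\<le>a. \<Sum>j\<le>b. X i j)"
  define L where "L = (\<Sum>i\<le>a. X i 0)"
  define M where "M = (\<Sum>j\<le>b. X 0 j)"
  have "0 = (\<Sum>j\<le>b. miwa_exp_coeff j *\<^sub>R (\<Sum>i\<le>a. miwa_exp_coeff i *\<^sub>R X i j))"
    using G[of a b] by (simp add: X_def)
  also have "\<dots> = 2 *\<^sub>R (\<Sum>j\<le>b. 2 *\<^sub>R (\<Sum>i\<le>a. X i j) - X 0 j) - (2 *\<^sub>R (\<Sum>i\<le>a. X i 0) - X 0 0)"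
    by (simp add: miwa_exp_coeff_sum)
  also have "\<dots> = 4 *\<^sub>R W - 2 *\<^sub>R M - 2 *\<^sub>R L + X 0 0"
    unfolding W_def M_def L_def
    by (simp add: sum_subtractf scaleR_sum_right scaleR_diff_right sum.swap[of _ "{..a}"] algebra_simps)
  finally have W4: "4 *\<^sub>R W = 2 *\<^sub>R M + 2 *\<^sub>R L - X 0 0"
    by (simp add: algebra_simps eq_neg_iff_add_eq_0)
  have "W = (1/4) *\<^sub>R (4 *\<^sub>R W)" by simp
  also have "\<dots> = (1/2) *\<^sub>R L + (1/2) *\<^sub>R M - (1/4) *\<^sub>R X 0 0"
    unfolding W4 by (simp add: scaleR_diff_right scaleR_add_right)
  finally have "W = (1/2) *\<^sub>R L + (1/2) *\<^sub>R M - (1/4) *\<^sub>R X 0 0" .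
  then show "(\<Sum>i\<le>a. \<Sum>j\<le>b. T (i + j + 1) (a - i) (b - j))
      = of_real (1/2) * (\<Sum>n\<le>a. T (Suc n) (a - n) b) + of_real (1/2) * (\<Sum>n\<le>b. T (Suc n) a (b - n))
        - of_real (1/4) * T 1 a b"
    unfolding W_def L_def M_def X_def by (simp add: scaleR_conv_of_real)
qed

lemma graded_lam_tail:
  fixes T :: "nat \<Rightarrow> nat \<Rightarrow> nat \<Rightarrow> 'a::real_algebra_1"
  assumes "\<And>p q. (\<Sum>j\<le>q. miwa_exp_coeff j *\<^sub>R (\<Sum>i\<le>p. miwa_exp_coeff i *\<^sub>R T (i + j + 1) (p - i) (q - j))) = 0"
  shows "graded_lam (\<lambda>n. T (Suc n))
    = graded_mu (\<lambda>n. T (Suc n)) - C2 (of_real (1/2)) * ((Lam - Mu) * inverse_Lam_Mu * bivar (T 1))"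
proof -
  define h :: "'a fls fls" where "h = C2 (of_real (1/2))"
  define x y z where "x = graded_lam (\<lambda>n. T (Suc n))" and "y = graded_mu (\<lambda>n. T (Suc n))"
    and "z = bivar (T 1)"
  have h: "central h" "h + h = 1"
    unfolding h_def by (simp_all add: C2_half_add_half)
  have inv: "central inverse_Lam_Mu" "inverse_Lam_Mu * ((Lam + Mu) * v) = v" for v :: "'a fls fls"
    by (simp_all add: inverse_Lam_Mu_times_Lam_Mu flip: mult.assoc)
  have "(Lam - Mu) * (h * x + h * y - h * h * z) = Lam * x - Mu * y"
    using graded_lam_mu_relation[of T] graded_lam_mu_eq[OF assms]
    by (simp add: h_def x_def y_def z_def C2_half_squared mult.assoc)
  moreover have "h * ((Lam + Mu) * (x - y)) + h * h * ((Lam - Mu) * z)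
      = (h + h - 1) * (Lam * x - Mu * y) - ((Lam - Mu) * (h * x + h * y - h * h * z) - (Lam * x - Mu * y))"
    using h(1) by (simp add: algebra_simps central_commute)
  ultimately have hLM: "h * ((Lam + Mu) * (x - y)) = - (h * h * ((Lam - Mu) * z))"
    using h(2) by (simp add: eq_neg_iff_add_eq_0)
  have "x - y = (h + h) * (inverse_Lam_Mu * ((Lam + Mu) * (x - y)))"
    by (simp add: h(2) inv(2))
  also have "\<dots> = inverse_Lam_Mu * (h * ((Lam + Mu) * (x - y))) + inverse_Lam_Mu * (h * ((Lam + Mu) * (x - y)))"
    using h(1) inv(1) by (simp add: distrib_right central_commute)
  also have "\<dots> = - ((h + h) * (h * ((Lam - Mu) * inverse_Lam_Mu * z)))"
    unfolding hLM using h(1) inv(1) by (simp add: central_commute mult.assoc distrib_left distrib_right)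
  finally show ?thesis
    unfolding x_def[symmetric] y_def[symmetric] z_def[symmetric] h_def[symmetric] h(2)
    by (simp add: algebra_simps)
qed

lemma Mu_inv_minus_Lam_inv_times:
  "(Mu_inv - Lam_inv) * (Lam * Mu * inverse_Lam_Mu) = (Lam - Mu) * (inverse_Lam_Mu :: 'a::ring_1 fls fls)"
proof -
  have inv: "Lam * (Lam_inv * z) = z" "Mu * (Mu_inv * z) = z" for z :: "'a fls fls"
    by (simp_all flip: mult.assoc)
  show ?thesis
    by (simp add: algebra_simps central_commute inv)
qed

lemma Mu_inv_sq_minus_Lam_inv_sq_times:
  "(Mu_inv\<^sup>2 - Lam_inv\<^sup>2) * (Lam * Mu * inverse_Lam_Mu) = (Mu_inv - Lam_inv :: 'a::ring_1 fls fls)"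
proof -
  have inv: "Lam * (Lam_inv * z) = z" "Mu * (Mu_inv * z) = z" for z :: "'a fls fls"
    by (simp_all flip: mult.assoc)
  have "(Mu_inv\<^sup>2 - Lam_inv\<^sup>2) * (Lam * Mu * inverse_Lam_Mu)
      = (Mu_inv - Lam_inv) * ((Lam + Mu) * (inverse_Lam_Mu :: 'a fls fls))"
    by (simp add: algebra_simps power2_eq_square central_commute inv)
  then show ?thesis by (simp add: Lam_Mu_times_inverse)
qed

context commuting_derivations
begin

text \<open>\<open>shifted_product_coeff2 w~ g n a b\<close> is the coefficient of \<open>z\<^sup>-\<^sup>n \<lambda>\<^sup>a \<mu>\<^sup>b\<close> in
  \<open>g(t\<^sub>o + 2[\<lambda>] + 2[\<mu>], z) w~(t\<^sub>o, z)\<close>.\<close>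

definition shifted_product_coeff2 :: "(nat \<Rightarrow> 'r) \<Rightarrow> (nat \<Rightarrow> 'r) \<Rightarrow> nat \<Rightarrow> nat \<Rightarrow> nat \<Rightarrow> 'r" where
  "shifted_product_coeff2 wt g n a b = (\<Sum>i\<le>n. P a (P b (g i)) * wt (n - i))"

lemma shser_mu_times_ser_mu: "shser_mu D g * ser_mu wt = graded_mu (shifted_product_coeff2 wt g)"
  unfolding shser_mu_def ser_mu_def bivar_mult graded_mu_def
proof (rule bivar_eqI)
  fix a b
  have "(\<Sum>i\<le>b. \<Sum>k\<le>a. (\<Sum>n\<le>i. P k (P (i - n) (g n))) * (if a - k = 0 then wt (b - i) else 0))
      = (\<Sum>i\<le>b. (\<Sum>n\<le>i. P a (P (i - n) (g n))) * wt (b - i))"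
  proof (rule sum.cong[OF refl])
    fix i
    have "(\<Sum>k\<le>a. (\<Sum>n\<le>i. P k (P (i - n) (g n))) * (if a - k = 0 then wt (b - i) else 0))
        = (\<Sum>k\<in>{a}. (\<Sum>n\<le>i. P k (P (i - n) (g n))) * wt (b - i))"
      by (rule sum.mono_neutral_cong_right) auto
    then show "(\<Sum>k\<le>a. (\<Sum>n\<le>i. P k (P (i - n) (g n))) * (if a - k = 0 then wt (b - i) else 0))
        = (\<Sum>n\<le>i. P a (P (i - n) (g n))) * wt (b - i)" by simp
  qed
  also have "\<dots> = (\<Sum>n\<le>b. shifted_product_coeff2 wt g n a (b - n))"
    unfolding shifted_product_coeff2_def using sum_triangle_reindex[of "\<lambda>x y z. P a (P y (g x)) * wt z" b]
    by (simp add: sum_distrib_right)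
  finally show "(\<Sum>i\<le>b. \<Sum>k\<le>a. (\<Sum>n\<le>i. P k (P (i - n) (g n))) * (if a - k = 0 then wt (b - i) else 0))
      = (\<Sum>n\<le>b. shifted_product_coeff2 wt g n a (b - n))" .
qed

lemma shser_lam_times_ser_lam: "shser_lam D g * ser_lam wt = graded_lam (shifted_product_coeff2 wt g)"
  unfolding shser_lam_def ser_lam_def bivar_mult graded_lam_def
proof (rule bivar_eqI)
  fix a b
  have "(\<Sum>i\<le>b. \<Sum>k\<le>a. (\<Sum>n\<le>k. P (k - n) (P i (g n))) * (if b - i = 0 then wt (a - k) else 0))
      = (\<Sum>i\<in>{b}. \<Sum>k\<le>a. (\<Sum>n\<le>k. P (k - n) (P i (g n))) * wt (a - k))"
    by (rule sum.mono_neutral_cong_right) auto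
  also have "\<dots> = (\<Sum>n\<le>a. shifted_product_coeff2 wt g n (a - n) b)"
    unfolding shifted_product_coeff2_def using sum_triangle_reindex[of "\<lambda>x y z. P y (P b (g x)) * wt z" a]
    by (simp add: sum_distrib_right)
  finally show "(\<Sum>i\<le>b. \<Sum>k\<le>a. (\<Sum>n\<le>k. P (k - n) (P i (g n))) * (if b - i = 0 then wt (a - k) else 0))
      = (\<Sum>n\<le>a. shifted_product_coeff2 wt g n (a - n) b)" .
qed

lemma shifted_residue_pairing_P_eq:
  "shifted_residue_pairing wt p (\<lambda>n. P b (g n)) m
    = (\<Sum>j\<le>p. miwa_exp_coeff j *\<^sub>R shifted_product_coeff2 wt g (Suc (m + j)) (p - j) b)"
  by (simp add: shifted_residue_pairing_def residue_pairing_def shifted_product_coeff2_def)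

lemma shifted_product_coeff2_identity:
  assumes "bilinear_identity D w wt"
  shows "(\<Sum>j\<le>q. miwa_exp_coeff j *\<^sub>R
    (\<Sum>i\<le>p. miwa_exp_coeff i *\<^sub>R shifted_product_coeff2 wt w (i + j + 1) (p - i) (q - j))) = 0"
  using shifted_residue_sum_eq_0[OF assms, of p q] by (simp add: shifted_residue_pairing_P_eq add.commute)

text \<open>\<open>derivative_product_coeff2 w~ w n a b\<close> is the coefficient of \<open>z\<^sup>-\<^sup>n \<lambda>\<^sup>a \<mu>\<^sup>b\<close> in
  \<open>(w' + z w)(t\<^sub>o + 2[\<lambda>] + 2[\<mu>], z) w~(t\<^sub>o, z)\<close>.\<close>

definition derivative_product_coeff2 :: "(nat \<Rightarrow> 'r) \<Rightarrow> (nat \<Rightarrow> 'r) \<Rightarrow> nat \<Rightarrow> nat \<Rightarrow> nat \<Rightarrow> 'r" where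
  "derivative_product_coeff2 wt w n a b
     = shifted_product_coeff2 wt w (Suc n) a b + shifted_product_coeff2 wt (\<lambda>i. D 0 (w i)) n a b"

lemma derivative_product_coeff2_identity:
  assumes "bilinear_identity D w wt"
  shows "(\<Sum>j\<le>q. miwa_exp_coeff j *\<^sub>R
    (\<Sum>i\<le>p. miwa_exp_coeff i *\<^sub>R derivative_product_coeff2 wt w (i + j + 1) (p - i) (q - j))) = 0"
  using shifted_residue_sum_D0_eq_0[OF assms, of p q]
  by (simp add: derivative_product_coeff2_def shifted_residue_pairing_P_eq add.commute
      scaleR_add_right sum.distrib)

lemma miwa2_eq_bivar: "miwa2 D f = bivar (\<lambda>a b. P a (P b f))"
  by (simp add: miwa2_def)

lemma miwa2_add: "miwa2 D (x + y) = miwa2 D x + miwa2 D y"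
  unfolding miwa2_eq_bivar bivar_add[symmetric] by (simp add: P_add)

lemma miwa2_uminus: "miwa2 D (- x) = - miwa2 D x"
  unfolding miwa2_eq_bivar bivar_uminus[symmetric] by (simp add: P_uminus)

lemma miwa2_scaleR: "miwa2 D (c *\<^sub>R x) = C2 (of_real c) * miwa2 D x"
  unfolding miwa2_eq_bivar C2_mult_bivar by (rule bivar_eqI) (simp only: P_scaleR, simp add: scaleR_conv_of_real)

lemma miwa2_mult: "miwa2 D (x * y) = miwa2 D x * miwa2 D y"
  unfolding miwa2_eq_bivar bivar_mult by (rule bivar_eqI) (simp add: P_mult P_sum)

end

context bilinear_setting
begin

lemma bivar_shifted_product_coeff2_0: "bivar (shifted_product_coeff2 wt w 0) = 1"
proof -
  have "bivar (shifted_product_coeff2 wt w 0) = bivar (\<lambda>a b. if a = 0 \<and> b = 0 then 1 else 0)"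
    by (rule bivar_eqI) (simp add: shifted_product_coeff2_def w0 wt0 P_one)
  then show ?thesis by (simp add: bivar_const C2_def)
qed

lemma bivar_shifted_product_coeff2_1: "bivar (shifted_product_coeff2 wt w 1) = C2 \<phi> - miwa2 D \<phi>"
proof -
  have "bivar (shifted_product_coeff2 wt w 1)
      = bivar (\<lambda>a b. (if a = 0 \<and> b = 0 then \<phi> else 0) - P a (P b \<phi>))"
    by (rule bivar_eqI)
      (simp add: shifted_product_coeff2_def w0 wt0 P_one wt_1[unfolded One_nat_def] w_1[unfolded One_nat_def] P_uminus)
  then show ?thesis unfolding bivar_diff bivar_const miwa2_eq_bivar .
qed

lemma bivar_shifted_product_coeff2_2:
  "bivar (shifted_product_coeff2 wt w 2) = C2 (wt 2) - miwa2 D \<phi> * C2 \<phi> + miwa2 D (w 2)"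
proof -
  have "bivar (shifted_product_coeff2 wt w 2)
      = bivar (\<lambda>a b. (if a = 0 \<and> b = 0 then wt 2 else 0) - P a (P b \<phi>) * \<phi> + P a (P b (w 2)))"
    by (rule bivar_eqI)
      (simp add: shifted_product_coeff2_def w0 wt0 P_one numeral_2_eq_2 wt_1[unfolded One_nat_def]
        w_1[unfolded One_nat_def] P_uminus)
  then show ?thesis unfolding bivar_add bivar_diff bivar_const bivar_mult_C2 miwa2_eq_bivar .
qed

lemma bivar_shifted_product_coeff2_D0_0: "bivar (shifted_product_coeff2 wt (\<lambda>i. D 0 (w i)) 0) = 0"
  unfolding shifted_product_coeff2_def by (simp add: w0 bivar_zero)

lemma bivar_shifted_product_coeff2_D0_1:
  "bivar (shifted_product_coeff2 wt (\<lambda>i. D 0 (w i)) 1) = - miwa2 D (D 0 \<phi>)"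
proof -
  have "bivar (shifted_product_coeff2 wt (\<lambda>i. D 0 (w i)) 1) = bivar (\<lambda>a b. - P a (P b (D 0 \<phi>)))"
    by (rule bivar_eqI) (simp add: shifted_product_coeff2_def w0 wt0 w_1[unfolded One_nat_def] D_uminus P_uminus)
  then show ?thesis unfolding bivar_uminus miwa2_eq_bivar .
qed

lemma identity_F2:
  assumes F2_def: "F2 = 1 - C2 (of_real (1/2)) * (Lam * Mu * uinv (Lam + Mu)) * (miwa2 D \<phi> - C2 \<phi>)"
  shows "F2 = uinv (Lam + Mu) *
              (Mu * (1 - C2 (of_real (1/2)) * Lam * (miwa2 D \<phi> - miwa_mu D \<phi>))
               + Lam * (1 - C2 (of_real (1/2)) * Mu * (miwa_mu D \<phi> - C2 \<phi>)))"
proof -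
  define h :: "'r fls fls" where "h = C2 (of_real (1/2))"
  define x y y\<mu> where "x = C2 \<phi>" and "y = miwa2 D \<phi>" and "y\<mu> = miwa_mu D \<phi>"
  have "inverse_Lam_Mu * (Mu * (1 - h * Lam * (y - y\<mu>)) + Lam * (1 - h * Mu * (y\<mu> - x)))
      = inverse_Lam_Mu * (Lam + Mu) - h * (Lam * Mu * inverse_Lam_Mu) * (y - x)"
    by (simp add: h_def algebra_simps central_commute)
  then show ?thesis
    unfolding F2_def uinv_Lam_Mu inverse_Lam_Mu_times_Lam_Mu h_def x_def y_def y\<mu>_def by simp
qed

lemma identity_iv:
  assumes F2_def: "F2 = 1 - C2 (of_real (1/2)) * (Lam * Mu * uinv (Lam + Mu)) * (miwa2 D \<phi> - C2 \<phi>)"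
  shows "Mu_inv * shser_mu D w * ser_mu wt - Lam_inv * shser_lam D w * ser_lam wt = (Mu_inv - Lam_inv) * F2"
proof -
  define h :: "'r fls fls" where "h = C2 (of_real (1/2))"
  define k t :: "'r fls fls" where "k = (Lam - Mu) * inverse_Lam_Mu" and "t = Lam * Mu * inverse_Lam_Mu"
  define s :: "'r fls fls" where "s = Mu_inv - Lam_inv"
  define x y where "x = C2 \<phi>" and "y = miwa2 D \<phi>"
  define S where "S = shifted_product_coeff2 wt w"
  have central: "central h" "central k" "central s" "central t"
    by (simp_all add: h_def k_def s_def t_def)
  have "s * t = k"
    unfolding s_def t_def k_def by (rule Mu_inv_minus_Lam_inv_times)
  then have st: "s * t = k" "s * (t * z) = k * z" for z
    by (simp_all flip: mult.assoc)
  have inv: "Mu_inv * (Mu * z) = z" "Lam_inv * (Lam * z) = z" for z :: "'r fls fls"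
    by (simp_all add: central_commute(1)[of Mu_inv] central_commute(1)[of Lam_inv] flip: mult.assoc)
  have "Mu_inv * shser_mu D w * ser_mu wt - Lam_inv * shser_lam D w * ser_lam wt
      = Mu_inv * graded_mu S - Lam_inv * graded_lam S"
    by (simp add: mult.assoc shser_mu_times_ser_mu shser_lam_times_ser_lam S_def)
  also have "\<dots> = s + h * (k * (x - y))"
    unfolding graded_mu_split[of S] graded_lam_split[of S]
      graded_lam_tail[OF shifted_product_coeff2_identity[OF bil, folded S_def]]
    unfolding S_def bivar_shifted_product_coeff2_0 bivar_shifted_product_coeff2_1
    by (simp add: algebra_simps inv s_def k_def h_def x_def y_def)
  also have "\<dots> = s * (1 - h * t * (y - x))"
    using central by (simp add: algebra_simps central_commute st)
  finally show ?thesis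
    unfolding F2_def uinv_Lam_Mu s_def h_def t_def x_def y_def .
qed

lemma bivar_derivative_product_coeff2_0:
  "bivar (derivative_product_coeff2 wt w 0) = C2 \<phi> - miwa2 D \<phi>"
  unfolding derivative_product_coeff2_def bivar_add One_nat_def[symmetric]
    bivar_shifted_product_coeff2_1 bivar_shifted_product_coeff2_D0_0
  by simp

lemma bivar_derivative_product_coeff2_1:
  "bivar (derivative_product_coeff2 wt w 1)
    = C2 (wt 2) - miwa2 D \<phi> * C2 \<phi> + miwa2 D (w 2) - miwa2 D (D 0 \<phi>)"
  unfolding derivative_product_coeff2_def bivar_add Suc_1 bivar_shifted_product_coeff2_2
    bivar_shifted_product_coeff2_D0_1
  by simp

lemma two_derivative_series_eq:
  "Mu_inv * (shser_mu D (\<lambda>n. D 0 (w n)) + Mu_inv * shser_mu D w) * ser_mu wt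
     - Lam_inv * (shser_lam D (\<lambda>n. D 0 (w n)) + Lam_inv * shser_lam D w) * ser_lam wt
   = (Mu_inv\<^sup>2 - Lam_inv\<^sup>2) + (Mu_inv - Lam_inv) * bivar (derivative_product_coeff2 wt w 0)
     + C2 (of_real (1/2)) * ((Lam - Mu) * inverse_Lam_Mu * bivar (derivative_product_coeff2 wt w 1))"
proof -
  define S S' where "S = shifted_product_coeff2 wt w" and "S' = shifted_product_coeff2 wt (\<lambda>i. D 0 (w i))"
  define T where "T = derivative_product_coeff2 wt w"
  have T_eq: "T = (\<lambda>n a b. S (Suc n) a b + S' n a b)"
    by (simp add: T_def S_def S'_def derivative_product_coeff2_def fun_eq_iff)
  have inv: "Mu_inv * (Mu * z) = z" "Lam_inv * (Lam * z) = z" for z :: "'r fls fls"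
    by (simp_all add: central_commute(1)[of Mu_inv] central_commute(1)[of Lam_inv] flip: mult.assoc)
  have "graded_mu S' + Mu_inv * graded_mu S = Mu_inv + graded_mu T"
    unfolding graded_mu_split[of S] T_eq graded_mu_add
    by (simp add: S_def bivar_shifted_product_coeff2_0 algebra_simps inv)
  then have mu: "Mu_inv * (shser_mu D (\<lambda>n. D 0 (w n)) + Mu_inv * shser_mu D w) * ser_mu wt
      = Mu_inv * Mu_inv + Mu_inv * bivar (T 0) + graded_mu (\<lambda>n. T (Suc n))"
    unfolding distrib_right mult.assoc shser_mu_times_ser_mu S_def[symmetric] S'_def[symmetric]
    by (simp add: graded_mu_split[of T] distrib_left inv add.assoc)
  have "graded_lam S' + Lam_inv * graded_lam S = Lam_inv + graded_lam T"
    unfolding graded_lam_split[of S] T_eq graded_lam_add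
    by (simp add: S_def bivar_shifted_product_coeff2_0 algebra_simps inv)
  then have lam: "Lam_inv * (shser_lam D (\<lambda>n. D 0 (w n)) + Lam_inv * shser_lam D w) * ser_lam wt
      = Lam_inv * Lam_inv + Lam_inv * bivar (T 0) + graded_lam (\<lambda>n. T (Suc n))"
    unfolding distrib_right mult.assoc shser_lam_times_ser_lam S_def[symmetric] S'_def[symmetric]
    by (simp add: graded_lam_split[of T] distrib_left inv add.assoc)
  show ?thesis
    unfolding T_def[symmetric] mu lam graded_lam_tail[OF derivative_product_coeff2_identity[OF bil, folded T_def]]
    by (simp add: power2_eq_square algebra_simps)
qed

lemma identity_v:
  assumes F2_def: "F2 = 1 - C2 (of_real (1/2)) * (Lam * Mu * uinv (Lam + Mu)) * (miwa2 D \<phi> - C2 \<phi>)"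
  shows "Mu_inv * (shser_mu D (\<lambda>n. D 0 (w n)) + Mu_inv * shser_mu D w) * ser_mu wt
           - Lam_inv * (shser_lam D (\<lambda>n. D 0 (w n)) + Lam_inv * shser_lam D w) * ser_lam wt
         = (Mu_inv\<^sup>2 - Lam_inv\<^sup>2) * F2\<^sup>2
           - C2 (of_real (1/2)) * ((Lam - Mu) * uinv (Lam + Mu)) * (miwa2 D \<theta>c - C2 \<theta>c)
           + C2 (of_real (1/4)) * ((Lam - Mu) * uinv (Lam + Mu)) * commut (C2 \<phi>) (miwa2 D \<phi>)"
proof -
  define h :: "'r fls fls" where "h = C2 (of_real (1/2))"
  define k t :: "'r fls fls" where "k = (Lam - Mu) * inverse_Lam_Mu" and "t = Lam * Mu * inverse_Lam_Mu"
  define s s2 :: "'r fls fls" where "s = Mu_inv - Lam_inv" and "s2 = Mu_inv\<^sup>2 - Lam_inv\<^sup>2"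
  define x\<phi> y\<phi> where "x\<phi> = C2 \<phi>" and "y\<phi> = miwa2 D \<phi>"
  define x\<phi>' y\<phi>' where "x\<phi>' = C2 (D 0 \<phi>)" and "y\<phi>' = miwa2 D (D 0 \<phi>)"
  define x\<theta> y\<theta> where "x\<theta> = C2 \<theta>t" and "y\<theta> = miwa2 D \<theta>t"
  have central: "central h" "central k" "central s" "central s2" "central t"
    by (simp_all add: h_def k_def s_def s2_def t_def)
  have h: "h + h = 1" "C2 (of_real (1/4)) = h * h"
    unfolding h_def by (simp_all add: C2_half_add_half C2_half_squared)
  have "s * t = k" "s2 * t = s"
    unfolding s_def s2_def t_def k_def by (rule Mu_inv_minus_Lam_inv_times Mu_inv_sq_minus_Lam_inv_sq_times)+
  then have st: "s * t = k" "s * (t * z) = k * z" "s2 * t = s" "s2 * (t * z) = s * z" for z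
    by (simp_all flip: mult.assoc)
  have "C2 (wt 2) = x\<theta> + h * x\<phi>' + h * (x\<phi> * x\<phi>)"
    unfolding identity_i C2_add C2_scaleR C2_mult x\<theta>_def x\<phi>'_def x\<phi>_def h_def by (simp add: distrib_left)
  moreover have "miwa2 D (w 2) = - y\<theta> + h * y\<phi>' + h * (y\<phi> * y\<phi>)"
    unfolding thetat_def miwa2_add miwa2_uminus miwa2_scaleR miwa2_mult y\<theta>_def y\<phi>'_def y\<phi>_def h_def
    by (simp add: distrib_left)
  ultimately have lhs: "Mu_inv * (shser_mu D (\<lambda>n. D 0 (w n)) + Mu_inv * shser_mu D w) * ser_mu wt
           - Lam_inv * (shser_lam D (\<lambda>n. D 0 (w n)) + Lam_inv * shser_lam D w) * ser_lam wt
      = s2 + s * (x\<phi> - y\<phi>) + h * (k * (x\<theta> + h * x\<phi>' + h * (x\<phi> * x\<phi>) - y\<phi> * x\<phi>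
          + (- y\<theta> + h * y\<phi>' + h * (y\<phi> * y\<phi>)) - y\<phi>'))"
    unfolding two_derivative_series_eq bivar_derivative_product_coeff2_0 bivar_derivative_product_coeff2_1
    by (simp add: s_def s2_def h_def k_def x\<phi>_def y\<phi>_def y\<phi>'_def mult.assoc)
  have rhs: "(Mu_inv\<^sup>2 - Lam_inv\<^sup>2) * F2\<^sup>2
           - C2 (of_real (1/2)) * ((Lam - Mu) * uinv (Lam + Mu)) * (miwa2 D \<theta>c - C2 \<theta>c)
           + C2 (of_real (1/4)) * ((Lam - Mu) * uinv (Lam + Mu)) * commut (C2 \<phi>) (miwa2 D \<phi>)
      = s2 * (1 - h * t * (y\<phi> - x\<phi>))\<^sup>2
        - h * k * (y\<theta> + h * y\<phi>' - (x\<theta> + h * x\<phi>')) + h * h * k * (x\<phi> * y\<phi> - y\<phi> * x\<phi>)"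
    unfolding F2_def uinv_Lam_Mu thetac_def miwa2_add miwa2_scaleR C2_add C2_scaleR
      commut_def h(2) h_def[symmetric] s2_def[symmetric] k_def[symmetric] t_def[symmetric]
      x\<phi>_def[symmetric] y\<phi>_def[symmetric] x\<phi>'_def[symmetric] y\<phi>'_def[symmetric]
      x\<theta>_def[symmetric] y\<theta>_def[symmetric] ..
  have "s2 + s * (x\<phi> - y\<phi>) + h * (k * (x\<theta> + h * x\<phi>' + h * (x\<phi> * x\<phi>) - y\<phi> * x\<phi>
          + (- y\<theta> + h * y\<phi>' + h * (y\<phi> * y\<phi>)) - y\<phi>'))
      - (s2 * ((1 - h * t * (y\<phi> - x\<phi>)) * (1 - h * t * (y\<phi> - x\<phi>)))
        - h * k * (y\<theta> + h * y\<phi>' - (x\<theta> + h * x\<phi>')) + h * h * k * (x\<phi> * y\<phi> - y\<phi> * x\<phi>))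
    = (h + h - 1) * (s * (y\<phi> - x\<phi>) + h * (k * (y\<phi> * x\<phi> + y\<phi>')))"
    using central by (simp add: algebra_simps central_commute st)
  then show ?thesis
    unfolding lhs rhs h(1) power2_eq_square[of "1 - h * t * (y\<phi> - x\<phi>)"] by simp
qed

end

theorem lemmaA1:
  fixes D :: "nat \<Rightarrow> 'r::real_algebra_1 \<Rightarrow> 'r"
    and w wt :: "nat \<Rightarrow> 'r"
    and \<phi> \<theta>t \<theta>c :: 'r
    and F1 :: "'r fls" and F2 :: "'r fls fls"
  assumes D_add: "\<And>k a b. D k (a + b) = D k a + D k b"
    and D_scale: "\<And>k c a. D k (c *\<^sub>R a) = c *\<^sub>R D k a"
    and D_mult: "\<And>k a b. D k (a * b) = D k a * b + a * D k b"
    and D_comm: "\<And>j k a. D j (D k a) = D k (D j a)"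
    and w0: "w 0 = 1" and wt0: "wt 0 = 1"
    and bil: "bilinear_identity D w wt"
    and phi_def: "\<phi> = - w 1"
    and thetat_def: "w 2 = - \<theta>t + (1/2) *\<^sub>R (D 0 \<phi> + \<phi> * \<phi>)"
    and thetac_def: "\<theta>c = \<theta>t + (1/2) *\<^sub>R D 0 \<phi>"
    and F1_def: "F1 = 1 - fls_const (of_real (1/2)) * fls_X * (miwa1 D \<phi> - fls_const \<phi>)"
    and F2_def: "F2 = 1 - C2 (of_real (1/2)) * (Lam * Mu * uinv (Lam + Mu)) * (miwa2 D \<phi> - C2 \<phi>)"
  shows "(F2 = uinv (Lam + Mu) *
              (Mu * (1 - C2 (of_real (1/2)) * Lam * (miwa2 D \<phi> - miwa_mu D \<phi>))
               + Lam * (1 - C2 (of_real (1/2)) * Mu * (miwa_mu D \<phi> - C2 \<phi>))))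
     \<and> (wt 2 = \<theta>t + (1/2) *\<^sub>R (D 0 \<phi> + \<phi> * \<phi>))
     \<and> (shser1 D w * ser1 wt = F1)
     \<and> ((shser1 D (\<lambda>n. D 0 (w n)) + fls_X_inv * shser1 D w) * ser1 wt
           = fls_X_inv * F1\<^sup>2
             - fls_const (of_real (1/2)) * fls_X * (miwa1 D \<theta>c - fls_const \<theta>c)
             + fls_const (of_real (1/4)) * fls_X * commut (fls_const \<phi>) (miwa1 D \<phi>))
     \<and> (Mu_inv * shser_mu D w * ser_mu wt - Lam_inv * shser_lam D w * ser_lam wt
           = (Mu_inv - Lam_inv) * F2)
     \<and> (Mu_inv * (shser_mu D (\<lambda>n. D 0 (w n)) + Mu_inv * shser_mu D w) * ser_mu wt
           - Lam_inv * (shser_lam D (\<lambda>n. D 0 (w n)) + Lam_inv * shser_lam D w) * ser_lam wt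
         = (Mu_inv\<^sup>2 - Lam_inv\<^sup>2) * F2\<^sup>2
           - C2 (of_real (1/2)) * ((Lam - Mu) * uinv (Lam + Mu)) * (miwa2 D \<theta>c - C2 \<theta>c)
           + C2 (of_real (1/4)) * ((Lam - Mu) * uinv (Lam + Mu)) * commut (C2 \<phi>) (miwa2 D \<phi>))"
proof -
  interpret bilinear_setting D w wt \<phi> \<theta>t \<theta>c
    by unfold_locales (fact assms)+
  show ?thesis
    using identity_F2[OF F2_def] identity_i identity_ii[OF F1_def] identity_iii[OF F1_def]
      identity_iv[OF F2_def] identity_v[OF F2_def]
    by blast
qed

end
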